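(* Consider a stochastic $A$-armed bandit with reward distributions supported in $[0,1]$, mean reward vector $r\in[0,1]^A$, optimal arm $a^*$, optimal (deterministic) policy $\pi^*$, and $\Delta:=\min_{a\ne a'}|r(a)-r(a')|$; set $\varrho=\frac{8A^{3/2}}{\Delta^2}$. Run stochastic softmax policy gradient $\theta_{t+1}=\theta_t+\eta_t\hat g(\theta_t)$, where at iteration $t$ an arm $a_t\sim\pi_{\theta_t}$ is pulled, a reward $R_t\sim P_{a_t}$ is observed, $\hat r_t(a)=\frac{\mathbb{I}\{a_t=a\}}{\pi_{\theta_t}(a)}R_t$ and $\hat g(\theta_t)(a)=\pi_{\theta_t}(a)[\hat r_t(a)-\langle\pi_{\theta_t},\hat r_t\rangle]$, with step-sizes $\eta_t=\eta_0\alpha^t$, $\eta_0\le\frac1{18}$, $\alpha=(\beta/T)^{1/T}$, $\beta\ge1$. Let $\epsilon\in(0,1)$ and suppose $\mu:=\Big[\mathbb{E}\big[\max_{t\in[1,T]}[\pi_{\theta_t}(a^* )]^{-2}\big]\Big]^{-1}>0$. If $\mathbb{E}[(\pi^*-\pi_{\theta_t})^\top r]\ge\epsilon$ for all $t\in[1,T]$, then $$\mathbb{E}[(\pi^*-\pi_{\theta_{T+1}})^\top r]\le\mathbb{E}[(\pi^*-\pi_{\theta_1})^\top r]\,C_1\exp\Big(-\frac{\alpha\,\epsilon\,T}{\kappa\ln(T/\beta)}\Big)+\frac{C_2\sum_{t=1}^{T_0-1}\mathbb{E}[(\pi^*-\pi_{\theta_t})^\top r]}{\epsilon^2T^2},$$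 where $\kappa:=\frac{2}{\mu\eta_0}$, $C_1:=\exp\big(\frac{2\beta}{\kappa\ln(T/\beta)}\big)$, $C_2:=\exp\big(\frac{2\beta}{\kappa\ln(T/\beta)}\big)\frac{32\varrho\kappa^2}{5e^2\alpha^2}\ln^2(T/\beta)$, $T_0:=T\max\big\{\frac{\ln(4\varrho\eta_0)}{\ln(T/\beta)},0\big\}$. Otherwise $\min_{t\in[1,T]}\mathbb{E}[(\pi^*-\pi_{\theta_t})^\top r]\le\epsilon$.
   Context: $\pi_\theta(a)=\exp(\theta(a))/\sum_{a'}\exp(\theta(a'))$ is the softmax policy over arms, $\pi^*$ is the indicator vector of $a^*=\arg\max_a r(a)$. Expectations are over the randomness of arm pulls and rewards. *)

theory Defs
  imports "HOL-Probability.Probability"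
begin

definition softmax :: "('a::finite \<Rightarrow> real) \<Rightarrow> 'a \<Rightarrow> real" where
  "softmax \<theta> a = exp (\<theta> a) / (\<Sum>b\<in>UNIV. exp (\<theta> b))"

definition pistar :: "'a \<Rightarrow> 'a \<Rightarrow> real" where
  "pistar astar a = (if a = astar then 1 else 0)"

definition subopt :: "('a::finite \<Rightarrow> real) \<Rightarrow> 'a \<Rightarrow> ('a \<Rightarrow> real) \<Rightarrow> real" where
  "subopt r astar \<theta> = (\<Sum>a\<in>UNIV. (pistar astar a - softmax \<theta> a) * r a)"

definition rhat :: "('a::finite \<Rightarrow> real) \<Rightarrow> 'a \<Rightarrow> real \<Rightarrow> 'a \<Rightarrow> real" where
  "rhat \<theta> b0 R a = (if b0 = a then 1 else 0) / softmax \<theta> a * R"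

definition ghat :: "('a::finite \<Rightarrow> real) \<Rightarrow> 'a \<Rightarrow> real \<Rightarrow> 'a \<Rightarrow> real" where
  "ghat \<theta> b0 R a = softmax \<theta> a *
     (rhat \<theta> b0 R a - (\<Sum>b\<in>UNIV. softmax \<theta> b * rhat \<theta> b0 R b))"

definition reward_gap :: "('a::finite \<Rightarrow> real) \<Rightarrow> real" where
  "reward_gap r = Min {\<bar>r a - r b\<bar> | a b. a \<noteq> b}"

end

(* Write V(theta) = <pi_theta, r>.  The update is theta + eta R (e_a - pi_theta), and a
   second-order expansion of V along it shows that, conditionally on the past, the expected
   sub-optimality G_t decreases by eta_t D_t up to an error K eta_t^2 D_t, where
   D_t = E |grad V(theta_t)|^2: the REINFORCE estimate is unbiased and its variance is
   controlled by |grad V|^2 / Delta^2 because the mean rewards are Delta-separated.  The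
   non-uniform Lojasiewicz inequality |grad V(theta)| >= pi_theta(a_star) G(theta) together
   with Cauchy-Schwarz gives D_t >= mu G_t^2.  While G_t >= eps this yields the contraction
   G_(t+1) <= (1 - eta_t mu eps / 2) G_t whenever K eta_t <= 1/2; the remaining steps are the
   early ones, t < T0, and contribute the second term.  Unrolling the recursion with the
   exponentially decaying step sizes gives the bound. *)
theory Submission
  imports Defs
begin

section \<open>Averages under the softmax policy\<close>

definition softmax_mean :: "('a::finite \<Rightarrow> real) \<Rightarrow> ('a \<Rightarrow> real) \<Rightarrow> real" where
  "softmax_mean \<theta> h = (\<Sum>a\<in>UNIV. softmax \<theta> a * h a)"

lemma sum_exp_pos: "(\<Sum>b\<in>(UNIV::'a::finite set). exp ((\<theta>::'a \<Rightarrow> real) b)) > 0"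
  by (rule sum_pos) auto

lemma softmax_pos: "softmax \<theta> a > 0"
  unfolding softmax_def by (intro divide_pos_pos exp_gt_zero sum_exp_pos)

lemma sum_softmax: "(\<Sum>a\<in>UNIV. softmax \<theta> a) = 1"
  unfolding softmax_def using sum_exp_pos[of \<theta>] by (simp add: sum_divide_distrib[symmetric])

lemma softmax_le_1: "softmax \<theta> a \<le> 1"
proof -
  have "softmax \<theta> a \<le> (\<Sum>c\<in>UNIV. softmax \<theta> c)"
    by (rule member_le_sum) (auto intro: less_imp_le softmax_pos)
  then show ?thesis by (simp add: sum_softmax)
qed

lemma softmax_mean_const [simp]: "softmax_mean \<theta> (\<lambda>a. k) = k"
  unfolding softmax_mean_def by (simp add: sum_distrib_right[symmetric] sum_softmax)

lemma softmax_mean_add: "softmax_mean \<theta> (\<lambda>a. f a + g a) = softmax_mean \<theta> f + softmax_mean \<theta> g"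
  unfolding softmax_mean_def by (simp add: sum.distrib algebra_simps)

lemma softmax_mean_diff: "softmax_mean \<theta> (\<lambda>a. f a - g a) = softmax_mean \<theta> f - softmax_mean \<theta> g"
  unfolding softmax_mean_def by (simp add: sum_subtractf algebra_simps)

lemma softmax_mean_cmult: "softmax_mean \<theta> (\<lambda>a. k * f a) = k * softmax_mean \<theta> f"
  unfolding softmax_mean_def by (simp add: sum_distrib_left algebra_simps)

lemma softmax_mean_indicator: "softmax_mean \<theta> (\<lambda>a. if a = b then k else 0) = softmax \<theta> b * k"
proof -
  have "softmax_mean \<theta> (\<lambda>a. if a = b then k else 0) = (\<Sum>a\<in>UNIV. if a = b then softmax \<theta> b * k else 0)"
    unfolding softmax_mean_def by (rule sum.cong) auto
  then show ?thesis by simp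
qed

lemma softmax_mean_mono: "(\<And>a. f a \<le> g a) \<Longrightarrow> softmax_mean \<theta> f \<le> softmax_mean \<theta> g"
  unfolding softmax_mean_def by (intro sum_mono mult_left_mono) (auto intro: less_imp_le softmax_pos)

lemma softmax_mean_nonneg: "(\<And>a. 0 \<le> f a) \<Longrightarrow> 0 \<le> softmax_mean \<theta> f"
  using softmax_mean_mono[of "\<lambda>a. 0" f \<theta>] by simp

lemma abs_softmax_mean_le:
  assumes "\<And>a. \<bar>h a\<bar> \<le> B"
  shows "\<bar>softmax_mean \<theta> h\<bar> \<le> B"
proof -
  have le: "h a \<le> B" and ge: "- B \<le> h a" for a
    using assms[of a] by arith+
  have "softmax_mean \<theta> h \<le> softmax_mean \<theta> (\<lambda>a. B)" by (rule softmax_mean_mono) (fact le)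
  moreover have "softmax_mean \<theta> (\<lambda>a. - B) \<le> softmax_mean \<theta> h" by (rule softmax_mean_mono) (fact ge)
  ultimately show ?thesis by simp
qed

lemma softmax_mean_swap:
  "softmax_mean \<theta> (\<lambda>b. softmax_mean \<theta> (\<lambda>a. f a b)) = softmax_mean \<theta> (\<lambda>a. softmax_mean \<theta> (\<lambda>b. f a b))"
  unfolding softmax_mean_def sum_distrib_left by (subst sum.swap) (simp add: mult_ac)

lemma softmax_mean_variance_le:
  "softmax_mean \<theta> (\<lambda>a. (v a - softmax_mean \<theta> v)\<^sup>2) \<le> softmax_mean \<theta> (\<lambda>a. (v a - c)\<^sup>2)"
proof -
  define m where "m = softmax_mean \<theta> v"
  have "softmax_mean \<theta> (\<lambda>a. (v a - c)\<^sup>2)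
      = softmax_mean \<theta> (\<lambda>a. (v a - m)\<^sup>2 + 2 * (m - c) * (v a - m) + (m - c)\<^sup>2)"
    by (rule arg_cong[where f="softmax_mean \<theta>"]) (auto simp: power2_eq_square algebra_simps)
  also have "\<dots> = softmax_mean \<theta> (\<lambda>a. (v a - m)\<^sup>2) + (m - c)\<^sup>2"
    by (simp add: softmax_mean_add softmax_mean_cmult softmax_mean_diff m_def)
  finally show ?thesis unfolding m_def by simp
qed

lemma softmax_mean_eq_ratio:
  "softmax_mean \<theta> h = (\<Sum>a\<in>UNIV. exp (\<theta> a) * h a) / (\<Sum>a\<in>UNIV. exp (\<theta> a))"
  unfolding softmax_mean_def softmax_def by (simp add: sum_divide_distrib)

lemma has_real_derivative_softmax_mean:
  fixes \<theta> v h :: "'a::finite \<Rightarrow> real" and x :: real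
  defines "\<theta>' \<equiv> \<lambda>a. \<theta> a + x * v a"
  shows "((\<lambda>s. softmax_mean (\<lambda>a. \<theta> a + s * v a) h) has_real_derivative
     softmax_mean \<theta>' (\<lambda>a. h a * v a) - softmax_mean \<theta>' h * softmax_mean \<theta>' v) (at x)"
proof -
  define N where "N = (\<lambda>s. \<Sum>a\<in>UNIV. exp (\<theta> a + s * v a) * h a)"
  define Z where "Z = (\<lambda>s. \<Sum>a\<in>UNIV. exp (\<theta> a + s * v a))"
  define N' where "N' = (\<Sum>a\<in>UNIV. exp (\<theta> a + x * v a) * (h a * v a))"
  define Z' where "Z' = (\<Sum>a\<in>UNIV. exp (\<theta> a + x * v a) * v a)"
  have N: "(N has_real_derivative N') (at x)"
    unfolding N_def N'_def by (auto intro!: derivative_eq_intros sum.cong simp: algebra_simps)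
  have Z: "(Z has_real_derivative Z') (at x)"
    unfolding Z_def Z'_def by (auto intro!: derivative_eq_intros sum.cong simp: algebra_simps)
  have Zx: "Z x > 0" unfolding Z_def by (rule sum_pos) auto
  have ratio: "softmax_mean (\<lambda>a. \<theta> a + s * v a) g = (\<Sum>a\<in>UNIV. exp (\<theta> a + s * v a) * g a) / Z s"
    for s g unfolding Z_def by (simp add: softmax_mean_eq_ratio)
  have "(N' * Z x - N x * Z') / (Z x * Z x) = N' / Z x - (N x / Z x) * (Z' / Z x)"
    using Zx by (simp add: field_simps)
  also have "\<dots> = softmax_mean \<theta>' (\<lambda>a. h a * v a) - softmax_mean \<theta>' h * softmax_mean \<theta>' v"
    unfolding \<theta>'_def ratio N_def N'_def Z'_def by simp
  finally show ?thesis
    using DERIV_divide[OF N Z] Zx unfolding ratio N_def by simp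
qed

lemma softmax_shift_le:
  fixes \<theta> v :: "'a::finite \<Rightarrow> real"
  assumes "\<And>a. \<bar>v a\<bar> \<le> c" "0 \<le> t" "t \<le> 1"
  shows "softmax (\<lambda>a. \<theta> a + t * v a) a \<le> exp (2 * c) * softmax \<theta> a"
proof -
  have tv: "\<bar>t * v b\<bar> \<le> c" for b
    using assms by (auto simp: abs_mult intro: order_trans[OF mult_left_le_one_le])
  have num: "exp (\<theta> a + t * v a) \<le> exp (\<theta> a) * exp c"
    using tv[of a] by (simp add: exp_add[symmetric])
  have den: "exp (- c) * (\<Sum>b\<in>UNIV. exp (\<theta> b)) \<le> (\<Sum>b\<in>UNIV. exp (\<theta> b + t * v b))"
    unfolding sum_distrib_left
  proof (rule sum_mono)
    fix b show "exp (- c) * exp (\<theta> b) \<le> exp (\<theta> b + t * v b)"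
      using tv[of b] by (simp add: exp_add[symmetric])
  qed
  have "softmax (\<lambda>a. \<theta> a + t * v a) a = exp (\<theta> a + t * v a) / (\<Sum>b\<in>UNIV. exp (\<theta> b + t * v b))"
    by (simp add: softmax_def)
  also have "\<dots> \<le> (exp (\<theta> a) * exp c) / (exp (- c) * (\<Sum>b\<in>UNIV. exp (\<theta> b)))"
    by (rule frac_le) (use num den sum_exp_pos[of \<theta>] in auto)
  also have "\<dots> = exp (2 * c) * softmax \<theta> a"
    by (simp add: softmax_def exp_minus field_simps exp_add[symmetric])
  finally show ?thesis .
qed

lemma softmax_mean_shift_le:
  fixes \<theta> v f :: "'a::finite \<Rightarrow> real"
  assumes "\<And>a. \<bar>v a\<bar> \<le> c" "0 \<le> t" "t \<le> 1" "\<And>a. 0 \<le> f a"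
  shows "softmax_mean (\<lambda>a. \<theta> a + t * v a) f \<le> exp (2 * c) * softmax_mean \<theta> f"
  unfolding softmax_mean_def sum_distrib_left
proof (rule sum_mono)
  fix a
  have "softmax (\<lambda>a. \<theta> a + t * v a) a * f a \<le> (exp (2 * c) * softmax \<theta> a) * f a"
    by (rule mult_right_mono[OF softmax_shift_le]) (use assms in auto)
  then show "softmax (\<lambda>a. \<theta> a + t * v a) a * f a \<le> exp (2 * c) * (softmax \<theta> a * f a)"
    by simp
qed

lemma softmax_mean_third_central_moment:
  fixes \<theta> v r :: "'a::finite \<Rightarrow> real"
  defines "m \<equiv> softmax_mean \<theta> v" and "F \<equiv> softmax_mean \<theta> r"
  shows "softmax_mean \<theta> (\<lambda>a. r a * v a * v a) - softmax_mean \<theta> (\<lambda>a. r a * v a) * m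
     - ((softmax_mean \<theta> (\<lambda>a. r a * v a) - F * m) * m
        + (softmax_mean \<theta> (\<lambda>a. v a * v a) - m * m) * F)
   = softmax_mean \<theta> (\<lambda>a. (r a - F) * (v a - m)\<^sup>2)"
proof -
  have "softmax_mean \<theta> (\<lambda>a. (r a - F) * (v a - m)\<^sup>2)
      = softmax_mean \<theta> (\<lambda>a. r a * v a * v a + (- 2 * m) * (r a * v a) + m\<^sup>2 * r a
          + (- F) * (v a * v a) + (2 * F * m) * v a + (- F * m\<^sup>2))"
    by (rule arg_cong[where f="softmax_mean \<theta>"]) (auto simp: power2_eq_square algebra_simps)
  also have "\<dots> = softmax_mean \<theta> (\<lambda>a. r a * v a * v a) - 2 * m * softmax_mean \<theta> (\<lambda>a. r a * v a)
      + m\<^sup>2 * F - F * softmax_mean \<theta> (\<lambda>a. v a * v a) + 2 * F * m * m - F * m\<^sup>2"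
    by (simp only: softmax_mean_add softmax_mean_cmult softmax_mean_const F_def m_def)
  finally show ?thesis by (simp add: power2_eq_square algebra_simps)
qed

text \<open>The second derivative of \<open>s \<mapsto> \<langle>\<pi>\<^sub>\<theta>\<^sub>+\<^sub>s\<^sub>v, r\<rangle>\<close> is the mixed central moment
  \<open>E[(r - E r)(v - E v)\<^sup>2]\<close>, which is at least \<open>-Var v\<close> because \<open>r\<close> takes values in \<open>[0,1]\<close>;
  along the segment this variance grows by at most the factor \<open>exp (2 c)\<close>.\<close>
lemma softmax_mean_second_order_lower_bound:
  fixes \<theta> v r :: "'a::finite \<Rightarrow> real"
  assumes r0: "\<And>a. 0 \<le> r a" and r1: "\<And>a. r a \<le> 1" and v: "\<And>a. \<bar>v a\<bar> \<le> c"
  shows "softmax_mean (\<lambda>a. \<theta> a + v a) r \<ge> softmax_mean \<theta> r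
            + (softmax_mean \<theta> (\<lambda>a. r a * v a) - softmax_mean \<theta> r * softmax_mean \<theta> v)
            - exp (2 * c) / 2 * softmax_mean \<theta> (\<lambda>a. (v a - softmax_mean \<theta> v)\<^sup>2)"
proof -
  define th where "th s = (\<lambda>a. \<theta> a + s * v a)" for s
  define cov where "cov s = softmax_mean (th s) (\<lambda>a. r a * v a) - softmax_mean (th s) r * softmax_mean (th s) v" for s
  define D2 where "D2 s = softmax_mean (th s) (\<lambda>a. r a * v a * v a) - softmax_mean (th s) (\<lambda>a. r a * v a) * softmax_mean (th s) v
     - (cov s * softmax_mean (th s) v
        + (softmax_mean (th s) (\<lambda>a. v a * v a) - softmax_mean (th s) v * softmax_mean (th s) v) * softmax_mean (th s) r)" for s
  define diff where "diff n = [\<lambda>s. softmax_mean (th s) r, cov, D2] ! n" for n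
  have "DERIV (diff m) t :> diff (Suc m) t" if "m < 2" for m t
  proof -
    have "m = 0 \<or> m = 1" using that by linarith
    moreover have "DERIV (\<lambda>s. softmax_mean (th s) r) t :> cov t"
      unfolding th_def cov_def by (rule has_real_derivative_softmax_mean)
    moreover have "DERIV cov t :> D2 t"
      unfolding cov_def D2_def th_def
      by (rule DERIV_diff[OF has_real_derivative_softmax_mean
            DERIV_mult[OF has_real_derivative_softmax_mean has_real_derivative_softmax_mean], simplified])
    ultimately show ?thesis by (auto simp: diff_def)
  qed
  then obtain t where t: "0 < t" "t < 1"
    and taylor: "softmax_mean (th 1) r = (\<Sum>m<2. diff m 0 / fact m * 1 ^ m) + diff 2 t / fact 2 * 1 ^ 2"
    using Maclaurin[of 1 2 diff "\<lambda>s. softmax_mean (th s) r"] by (auto simp: diff_def)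
  have th0: "th 0 = \<theta>" and th1: "th 1 = (\<lambda>a. \<theta> a + v a)" by (simp_all add: th_def)
  have expansion: "softmax_mean (\<lambda>a. \<theta> a + v a) r = softmax_mean \<theta> r
      + (softmax_mean \<theta> (\<lambda>a. r a * v a) - softmax_mean \<theta> r * softmax_mean \<theta> v) + D2 t / 2"
    using taylor by (simp add: th0 th1 diff_def cov_def numeral_2_eq_2)
  define m where "m = softmax_mean (th t) v"
  define m0 where "m0 = softmax_mean \<theta> v"
  have "D2 t = softmax_mean (th t) (\<lambda>a. (r a - softmax_mean (th t) r) * (v a - m)\<^sup>2)"
    unfolding D2_def cov_def m_def using softmax_mean_third_central_moment[where \<theta>="th t" and v=v and r=r] by simp
  also have "\<dots> \<ge> softmax_mean (th t) (\<lambda>a. - 1 * (v a - m)\<^sup>2)"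
  proof (rule softmax_mean_mono)
    fix a
    have "softmax_mean (th t) r \<le> 1" using softmax_mean_mono[of r "\<lambda>a. 1" "th t"] r1 by simp
    then show "- 1 * (v a - m)\<^sup>2 \<le> (r a - softmax_mean (th t) r) * (v a - m)\<^sup>2"
      using r0[of a] by (intro mult_right_mono) auto
  qed
  finally have "- softmax_mean (th t) (\<lambda>a. (v a - m)\<^sup>2) \<le> D2 t"
    using softmax_mean_cmult[of "th t" "- 1" "\<lambda>a. (v a - m)\<^sup>2"] by simp
  moreover have "softmax_mean (th t) (\<lambda>a. (v a - m)\<^sup>2) \<le> softmax_mean (th t) (\<lambda>a. (v a - m0)\<^sup>2)"
    unfolding m_def by (rule softmax_mean_variance_le)
  moreover have "softmax_mean (th t) (\<lambda>a. (v a - m0)\<^sup>2) \<le> exp (2 * c) * softmax_mean \<theta> (\<lambda>a. (v a - m0)\<^sup>2)"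
    unfolding th_def by (rule softmax_mean_shift_le) (use v t in auto)
  ultimately have "- exp (2 * c) * softmax_mean \<theta> (\<lambda>a. (v a - m0)\<^sup>2) \<le> D2 t" by linarith
  then show ?thesis using expansion unfolding m0_def by simp
qed

section \<open>Score function and policy gradient\<close>

text \<open>\<open>score \<theta> b\<close> is \<open>\<nabla>\<^sub>\<theta> log \<pi>\<^sub>\<theta>(b)\<close> and \<open>grad_norm_sq r \<theta>\<close> is \<open>\<parallel>\<nabla>\<^sub>\<theta> \<langle>\<pi>\<^sub>\<theta>, r\<rangle>\<parallel>\<^sup>2\<close>.\<close>

definition score :: "('a::finite \<Rightarrow> real) \<Rightarrow> 'a \<Rightarrow> 'a \<Rightarrow> real" where
  "score \<theta> b a = (if b = a then 1 else 0) - softmax \<theta> a"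

definition score_cov :: "('a::finite \<Rightarrow> real) \<Rightarrow> ('a \<Rightarrow> real) \<Rightarrow> 'a \<Rightarrow> real" where
  "score_cov r \<theta> b = softmax_mean \<theta> (\<lambda>a. r a * score \<theta> b a) - softmax_mean \<theta> r * softmax_mean \<theta> (score \<theta> b)"

definition score_var :: "('a::finite \<Rightarrow> real) \<Rightarrow> 'a \<Rightarrow> real" where
  "score_var \<theta> b = softmax_mean \<theta> (\<lambda>a. (score \<theta> b a - softmax_mean \<theta> (score \<theta> b))\<^sup>2)"

definition grad_norm_sq :: "('a::finite \<Rightarrow> real) \<Rightarrow> ('a \<Rightarrow> real) \<Rightarrow> real" where
  "grad_norm_sq r \<theta> = (\<Sum>a\<in>UNIV. (softmax \<theta> a)\<^sup>2 * (r a - softmax_mean \<theta> r)\<^sup>2)"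

lemma ghat_eq_score: "ghat \<theta> b R a = R * score \<theta> b a"
proof -
  have p: "softmax \<theta> c \<noteq> 0" for c using softmax_pos[of \<theta> c] by simp
  have "(\<Sum>c\<in>UNIV. softmax \<theta> c * rhat \<theta> b R c) = (\<Sum>c\<in>UNIV. if b = c then R else 0)"
    by (rule sum.cong) (auto simp: rhat_def p)
  then have "(\<Sum>c\<in>UNIV. softmax \<theta> c * rhat \<theta> b R c) = R" by simp
  then show ?thesis unfolding ghat_def score_def by (auto simp: rhat_def p algebra_simps)
qed

lemma subopt_eq: "subopt r astar \<theta> = r astar - softmax_mean \<theta> r"
proof -
  have "(\<Sum>a\<in>UNIV. pistar astar a * r a) = (\<Sum>a\<in>UNIV. if a = astar then r astar else 0)"
    by (rule sum.cong) (auto simp: pistar_def)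
  then show ?thesis
    unfolding subopt_def softmax_mean_def by (simp add: algebra_simps sum_subtractf)
qed

lemma abs_score_le_1: "\<bar>score \<theta> b a\<bar> \<le> 1"
  using softmax_pos[of \<theta> a] softmax_le_1[of \<theta> a] unfolding score_def by auto

lemma abs_score_cov_le_2:
  assumes "\<And>a. 0 \<le> r a" "\<And>a. r a \<le> 1"
  shows "\<bar>score_cov r \<theta> b\<bar> \<le> 2"
proof -
  have "\<bar>softmax_mean \<theta> (\<lambda>a. r a * score \<theta> b a)\<bar> \<le> 1"
  proof (rule abs_softmax_mean_le)
    fix a show "\<bar>r a * score \<theta> b a\<bar> \<le> 1"
      using assms[of a] abs_score_le_1[of \<theta> b a] by (simp add: abs_mult mult_le_one)
  qed
  moreover have "\<bar>softmax_mean \<theta> r\<bar> \<le> 1" by (rule abs_softmax_mean_le) (use assms in auto)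
  moreover have "\<bar>softmax_mean \<theta> (score \<theta> b)\<bar> \<le> 1" by (rule abs_softmax_mean_le) (rule abs_score_le_1)
  ultimately have "\<bar>softmax_mean \<theta> r * softmax_mean \<theta> (score \<theta> b)\<bar> \<le> 1"
    by (simp add: abs_mult mult_le_one)
  with \<open>\<bar>softmax_mean \<theta> (\<lambda>a. r a * score \<theta> b a)\<bar> \<le> 1\<close> show ?thesis
    unfolding score_cov_def by linarith
qed

lemma score_var_nonneg: "0 \<le> score_var \<theta> b"
  unfolding score_var_def by (rule softmax_mean_nonneg) simp

lemma abs_score_var_le_4: "\<bar>score_var \<theta> b\<bar> \<le> 4"
proof -
  have "\<bar>softmax_mean \<theta> (score \<theta> b)\<bar> \<le> 1" by (rule abs_softmax_mean_le) (rule abs_score_le_1)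
  then have "\<bar>score \<theta> b a - softmax_mean \<theta> (score \<theta> b)\<bar> \<le> 2" for a
    using abs_score_le_1[of \<theta> b a] by linarith
  then have "\<bar>score \<theta> b a - softmax_mean \<theta> (score \<theta> b)\<bar>\<^sup>2 \<le> 2\<^sup>2" for a
    by (intro power_mono) auto
  then have "\<bar>(score \<theta> b a - softmax_mean \<theta> (score \<theta> b))\<^sup>2\<bar> \<le> 4" for a
    by simp
  then show ?thesis unfolding score_var_def by (rule abs_softmax_mean_le)
qed

lemma grad_norm_sq_nonneg: "0 \<le> grad_norm_sq r \<theta>"
  unfolding grad_norm_sq_def by (rule sum_nonneg) simp

lemma score_cov_eq:
  "score_cov r \<theta> b = softmax \<theta> b * (r b - softmax_mean \<theta> r)
     - (\<Sum>a\<in>UNIV. (softmax \<theta> a)\<^sup>2 * (r a - softmax_mean \<theta> r))"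
proof -
  have mean_score: "softmax_mean \<theta> (score \<theta> b) = softmax \<theta> b - (\<Sum>a\<in>UNIV. (softmax \<theta> a)\<^sup>2)"
    unfolding score_def softmax_mean_diff
    by (simp add: softmax_mean_indicator[of \<theta> b 1, simplified] eq_commute[of b])
       (simp add: softmax_mean_def power2_eq_square)
  have mean_reward_score: "softmax_mean \<theta> (\<lambda>a. r a * score \<theta> b a)
      = softmax \<theta> b * r b - (\<Sum>a\<in>UNIV. (softmax \<theta> a)\<^sup>2 * r a)"
  proof -
    have "softmax_mean \<theta> (\<lambda>a. r a * score \<theta> b a)
        = softmax_mean \<theta> (\<lambda>a. (if a = b then r b else 0) - softmax \<theta> a * r a)"
      unfolding score_def by (rule arg_cong[where f="softmax_mean \<theta>"]) (auto simp: algebra_simps)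
    then show ?thesis
      unfolding softmax_mean_diff softmax_mean_indicator
      by (simp add: softmax_mean_def power2_eq_square mult.assoc)
  qed
  show ?thesis unfolding score_cov_def mean_score mean_reward_score
    by (simp add: algebra_simps sum_subtractf sum_distrib_left sum_distrib_right)
qed

text \<open>Unbiasedness of the REINFORCE estimate: the expected first-order gain is the squared gradient norm.\<close>
lemma softmax_mean_reward_score_cov: "softmax_mean \<theta> (\<lambda>b. r b * score_cov r \<theta> b) = grad_norm_sq r \<theta>"
proof -
  define F where "F = softmax_mean \<theta> r"
  define Q where "Q = (\<Sum>a\<in>UNIV. (softmax \<theta> a)\<^sup>2 * (r a - F))"
  have "softmax_mean \<theta> (\<lambda>b. r b * score_cov r \<theta> b)
      = softmax_mean \<theta> (\<lambda>b. r b * (softmax \<theta> b * (r b - F)) - Q * r b)"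
    unfolding score_cov_eq F_def[symmetric] Q_def[symmetric]
    by (rule arg_cong[where f="softmax_mean \<theta>"]) (auto simp: algebra_simps)
  also have "\<dots> = (\<Sum>b\<in>UNIV. (softmax \<theta> b)\<^sup>2 * r b * (r b - F)) - Q * F"
    unfolding softmax_mean_diff softmax_mean_cmult F_def
    by (simp add: softmax_mean_def power2_eq_square mult_ac)
  also have "\<dots> = (\<Sum>b\<in>UNIV. (softmax \<theta> b)\<^sup>2 * r b * (r b - F) - F * ((softmax \<theta> b)\<^sup>2 * (r b - F)))"
    unfolding sum_subtractf Q_def by (simp add: sum_distrib_left mult_ac)
  also have "\<dots> = grad_norm_sq r \<theta>"
    unfolding grad_norm_sq_def F_def[symmetric]
    by (rule sum.cong) (auto simp: power2_eq_square algebra_simps)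
  finally show ?thesis .
qed

lemma softmax_mean_score_var_le:
  "softmax_mean \<theta> (score_var \<theta>) \<le> 4 * (1 - softmax \<theta> a0)\<^sup>2"
proof -
  define p where "p = softmax \<theta>"
  define \<delta> where "\<delta> = 1 - p a0"
  have p_nonneg: "0 \<le> p a" for a unfolding p_def using softmax_pos[of \<theta> a] by simp
  have rest: "(\<Sum>a\<in>UNIV-{a0}. p a) = \<delta>"
    using sum_softmax[of \<theta>] sum.remove[of UNIV a0 p] unfolding \<delta>_def p_def by simp
  have p_le: "p a \<le> \<delta>" if "a \<noteq> a0" for a
    unfolding rest[symmetric] by (rule member_le_sum) (use that p_nonneg in auto)
  have pointwise: "softmax_mean \<theta> (\<lambda>b. (score \<theta> b a - score \<theta> b a0)\<^sup>2)
      \<le> (if a = a0 then 0 else 3 * p a + \<delta>)" for a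
  proof (cases "a = a0")
    case False
    define e where "e = p a0 - p a"
    have "(score \<theta> b a - score \<theta> b a0)\<^sup>2
        = (if b = a then 1 + 2 * e else 0) + (if b = a0 then 1 - 2 * e else 0) + e\<^sup>2" for b
      using False unfolding score_def e_def p_def by (auto simp: power2_eq_square algebra_simps)
    then have "softmax_mean \<theta> (\<lambda>b. (score \<theta> b a - score \<theta> b a0)\<^sup>2)
        = p a * (1 + 2 * e) + p a0 * (1 - 2 * e) + e\<^sup>2"
      by (simp add: softmax_mean_add softmax_mean_indicator p_def)
    also have "\<dots> = 3 * p a + \<delta> - (\<delta> + p a)\<^sup>2"
      unfolding e_def \<delta>_def by (simp add: power2_eq_square algebra_simps)
    finally show ?thesis using False by simp
  qed simp
  have "softmax_mean \<theta> (score_var \<theta>)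
      \<le> softmax_mean \<theta> (\<lambda>b. softmax_mean \<theta> (\<lambda>a. (score \<theta> b a - score \<theta> b a0)\<^sup>2))"
    unfolding score_var_def by (intro softmax_mean_mono softmax_mean_variance_le)
  also have "\<dots> = softmax_mean \<theta> (\<lambda>a. softmax_mean \<theta> (\<lambda>b. (score \<theta> b a - score \<theta> b a0)\<^sup>2))"
    by (rule softmax_mean_swap)
  also have "\<dots> \<le> softmax_mean \<theta> (\<lambda>a. if a = a0 then 0 else 3 * p a + \<delta>)"
    by (rule softmax_mean_mono) (rule pointwise)
  also have "\<dots> = (\<Sum>a\<in>UNIV-{a0}. p a * (3 * p a + \<delta>))"
    unfolding softmax_mean_def p_def[symmetric]
    by (subst sum.remove[of UNIV a0]) (auto intro!: sum.cong)
  also have "\<dots> \<le> (\<Sum>a\<in>UNIV-{a0}. p a * (4 * \<delta>))"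
    by (rule sum_mono) (auto intro!: mult_left_mono p_nonneg dest: p_le)
  also have "\<dots> = 4 * \<delta>\<^sup>2"
    by (simp add: sum_distrib_right[symmetric] rest power2_eq_square)
  finally show ?thesis unfolding \<delta>_def p_def .
qed

text \<open>Take \<open>a0\<close> with \<open>r a0\<close> closest to \<open>\<langle>\<pi>\<^sub>\<theta>, r\<rangle>\<close>: every other arm is then at distance
  \<open>\<ge> \<Delta>/2\<close> from the mean, and Cauchy-Schwarz bounds the mass \<open>1 - \<pi>\<^sub>\<theta>(a0)\<close> of the other arms.\<close>
lemma exists_arm_mass_bounded_by_grad_norm_sq:
  fixes r :: "'a::finite \<Rightarrow> real"
  assumes gap: "\<And>a b. a \<noteq> b \<Longrightarrow> \<Delta> \<le> \<bar>r a - r b\<bar>" and \<Delta>: "\<Delta> > 0"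
  shows "\<exists>a0. \<Delta>\<^sup>2 * (1 - softmax \<theta> a0)\<^sup>2 \<le> 4 * (real CARD('a) - 1) * grad_norm_sq r \<theta>"
proof -
  define p where "p = softmax \<theta>"
  define F where "F = softmax_mean \<theta> r"
  obtain a0 where "is_arg_min (\<lambda>a. \<bar>r a - F\<bar>) (\<lambda>a. a \<in> UNIV) a0"
    using ex_is_arg_min_if_finite[of UNIV "\<lambda>a. \<bar>r a - F\<bar>"] by auto
  then have a0: "\<bar>r a0 - F\<bar> \<le> \<bar>r a - F\<bar>" for a by (simp add: is_arg_min_linorder)
  have rest: "(\<Sum>a\<in>UNIV-{a0}. p a) = 1 - p a0"
    using sum_softmax[of \<theta>] sum.remove[of UNIV a0 p] unfolding p_def by simp
  have far: "\<Delta>\<^sup>2 \<le> 4 * (r a - F)\<^sup>2" if "a \<noteq> a0" for a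
  proof -
    have "\<Delta> \<le> \<bar>r a - r a0\<bar>" using gap that by auto
    also have "\<dots> \<le> 2 * \<bar>r a - F\<bar>" using abs_triangle_ineq4[of "r a - F" "r a0 - F"] a0[of a] by simp
    finally have "\<Delta>\<^sup>2 \<le> (2 * \<bar>r a - F\<bar>)\<^sup>2" by (intro power_mono) (use \<Delta> in auto)
    then show ?thesis by (simp add: power_mult_distrib)
  qed
  have "(1 - p a0)\<^sup>2 \<le> (\<Sum>a\<in>UNIV-{a0}. (p a)\<^sup>2) * real (card (UNIV - {a0}))"
    unfolding rest[symmetric] by (rule sum_squared_le_sum_of_squares)
  also have "\<dots> = (real CARD('a) - 1) * (\<Sum>a\<in>UNIV-{a0}. (p a)\<^sup>2)"
    by (simp add: card_Diff_singleton of_nat_diff)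
  finally have "\<Delta>\<^sup>2 * (1 - p a0)\<^sup>2 \<le> \<Delta>\<^sup>2 * ((real CARD('a) - 1) * (\<Sum>a\<in>UNIV-{a0}. (p a)\<^sup>2))"
    by (rule mult_left_mono) simp
  also have "\<dots> = (real CARD('a) - 1) * (\<Sum>a\<in>UNIV-{a0}. \<Delta>\<^sup>2 * (p a)\<^sup>2)"
    by (simp add: sum_distrib_left mult.left_commute)
  also have "\<dots> \<le> (real CARD('a) - 1) * (\<Sum>a\<in>UNIV-{a0}. 4 * ((p a)\<^sup>2 * (r a - F)\<^sup>2))"
  proof (intro mult_left_mono sum_mono)
    fix a assume "a \<in> UNIV - {a0}"
    then have "\<Delta>\<^sup>2 * (p a)\<^sup>2 \<le> 4 * (r a - F)\<^sup>2 * (p a)\<^sup>2" using far by (intro mult_right_mono) auto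
    then show "\<Delta>\<^sup>2 * (p a)\<^sup>2 \<le> 4 * ((p a)\<^sup>2 * (r a - F)\<^sup>2)" by (simp only: mult_ac)
  qed (simp add: Suc_le_eq)
  also have "\<dots> \<le> (real CARD('a) - 1) * (4 * grad_norm_sq r \<theta>)"
    unfolding sum_distrib_left[symmetric] grad_norm_sq_def p_def F_def
    by (intro mult_left_mono sum_mono2) (auto simp: Suc_le_eq)
  finally have "\<Delta>\<^sup>2 * (1 - p a0)\<^sup>2 \<le> 4 * (real CARD('a) - 1) * grad_norm_sq r \<theta>"
    by (simp only: mult_ac)
  then show ?thesis unfolding p_def by blast
qed

lemma softmax_mean_score_var_le_grad_norm_sq:
  fixes r :: "'a::finite \<Rightarrow> real"
  assumes "\<And>a b. a \<noteq> b \<Longrightarrow> \<Delta> \<le> \<bar>r a - r b\<bar>" and \<Delta>: "\<Delta> > 0"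
  shows "softmax_mean \<theta> (score_var \<theta>) \<le> 16 * (real CARD('a) - 1) / \<Delta>\<^sup>2 * grad_norm_sq r \<theta>"
proof -
  obtain a0 where "\<Delta>\<^sup>2 * (1 - softmax \<theta> a0)\<^sup>2 \<le> 4 * (real CARD('a) - 1) * grad_norm_sq r \<theta>"
    using exists_arm_mass_bounded_by_grad_norm_sq[where r=r, OF assms] by blast
  moreover have "\<Delta>\<^sup>2 * softmax_mean \<theta> (score_var \<theta>) \<le> \<Delta>\<^sup>2 * (4 * (1 - softmax \<theta> a0)\<^sup>2)"
    by (rule mult_left_mono[OF softmax_mean_score_var_le]) simp
  ultimately have "\<Delta>\<^sup>2 * softmax_mean \<theta> (score_var \<theta>) \<le> 16 * (real CARD('a) - 1) * grad_norm_sq r \<theta>"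
    by linarith
  then show ?thesis using \<Delta> by (simp add: field_simps)
qed

lemma subopt_nonneg:
  assumes "\<And>a. r a \<le> r astar"
  shows "0 \<le> subopt r astar \<theta>"
  using softmax_mean_mono[of r "\<lambda>a. r astar" \<theta>] assms by (simp add: subopt_eq)

lemma subopt_le_1:
  assumes "\<And>a. 0 \<le> r a" "\<And>a. r a \<le> 1"
  shows "subopt r astar \<theta> \<le> 1"
  using softmax_mean_nonneg[of r \<theta>] assms(1) assms(2)[of astar] by (simp add: subopt_eq)

lemma nonuniform_lojasiewicz: "(softmax \<theta> astar)\<^sup>2 * (subopt r astar \<theta>)\<^sup>2 \<le> grad_norm_sq r \<theta>"
  unfolding grad_norm_sq_def subopt_eq by (rule member_le_sum) auto

lemma grad_norm_sq_le_subopt: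
  assumes r0: "\<And>a. 0 \<le> r a" and r1: "\<And>a. r a \<le> 1" and opt: "\<And>a. r a \<le> r astar"
  shows "grad_norm_sq r \<theta> \<le> subopt r astar \<theta>"
proof -
  have "grad_norm_sq r \<theta> \<le> softmax_mean \<theta> (\<lambda>a. (r a - softmax_mean \<theta> r)\<^sup>2)"
    unfolding grad_norm_sq_def softmax_mean_def[of \<theta> "\<lambda>a. (r a - softmax_mean \<theta> r)\<^sup>2"]
  proof (rule sum_mono)
    fix a
    have "(softmax \<theta> a)\<^sup>2 \<le> softmax \<theta> a"
      using softmax_pos[of \<theta> a] softmax_le_1[of \<theta> a] by (simp add: power2_eq_square mult_left_le)
    then show "(softmax \<theta> a)\<^sup>2 * (r a - softmax_mean \<theta> r)\<^sup>2 \<le> softmax \<theta> a * (r a - softmax_mean \<theta> r)\<^sup>2"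
      by (rule mult_right_mono) simp
  qed
  also have "\<dots> \<le> softmax_mean \<theta> (\<lambda>a. (r a - r astar)\<^sup>2)" by (rule softmax_mean_variance_le)
  also have "\<dots> \<le> softmax_mean \<theta> (\<lambda>a. r astar - r a)"
  proof (rule softmax_mean_mono)
    fix a
    have "0 \<le> r astar - r a" "r astar - r a \<le> 1" using opt[of a] r0[of a] r1[of astar] by auto
    then have "(r astar - r a) * (r astar - r a) \<le> r astar - r a" by (simp add: mult_left_le)
    then show "(r a - r astar)\<^sup>2 \<le> r astar - r a"
      by (simp add: power2_eq_square algebra_simps)
  qed
  also have "\<dots> = subopt r astar \<theta>" by (simp add: softmax_mean_diff subopt_eq)
  finally show ?thesis .
qed

lemma subopt_policy_gradient_step_le:
  fixes r :: "'a::finite \<Rightarrow> real"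
  assumes r0: "\<And>a. 0 \<le> r a" and r1: "\<And>a. r a \<le> 1"
    and R: "0 \<le> R" "R \<le> 1" and \<eta>: "0 \<le> \<eta>"
  shows "subopt r astar (\<lambda>a. \<theta> a + \<eta> * ghat \<theta> b R a)
     \<le> subopt r astar \<theta> - \<eta> * R * score_cov r \<theta> b + exp (2 * \<eta>) / 2 * \<eta>\<^sup>2 * score_var \<theta> b"
proof -
  define v where "v = (\<lambda>a. \<eta> * R * score \<theta> b a)"
  have step: "(\<lambda>a. \<theta> a + \<eta> * ghat \<theta> b R a) = (\<lambda>a. \<theta> a + v a)"
    unfolding v_def ghat_eq_score by (auto simp: mult_ac)
  have v_le: "\<bar>v a\<bar> \<le> \<eta>" for a
  proof -
    have "\<bar>v a\<bar> = \<eta> * R * \<bar>score \<theta> b a\<bar>" unfolding v_def using \<eta> R by (simp add: abs_mult)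
    also have "\<dots> \<le> \<eta> * 1 * 1" by (intro mult_mono) (use \<eta> R abs_score_le_1 in auto)
    finally show ?thesis by simp
  qed
  have mean_v: "softmax_mean \<theta> v = (\<eta> * R) * softmax_mean \<theta> (score \<theta> b)"
    unfolding v_def softmax_mean_cmult[symmetric] by (simp add: mult_ac)
  have cov: "softmax_mean \<theta> (\<lambda>a. r a * v a) - softmax_mean \<theta> r * softmax_mean \<theta> v = \<eta> * R * score_cov r \<theta> b"
  proof -
    have "softmax_mean \<theta> (\<lambda>a. r a * v a) = (\<eta> * R) * softmax_mean \<theta> (\<lambda>a. r a * score \<theta> b a)"
      unfolding v_def softmax_mean_cmult[symmetric] by (simp add: mult_ac)
    then show ?thesis unfolding score_cov_def mean_v by (simp add: algebra_simps)
  qed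
  have var: "softmax_mean \<theta> (\<lambda>a. (v a - softmax_mean \<theta> v)\<^sup>2) = (\<eta> * R)\<^sup>2 * score_var \<theta> b"
  proof -
    have "(\<lambda>a. (v a - softmax_mean \<theta> v)\<^sup>2) = (\<lambda>a. (\<eta> * R)\<^sup>2 * (score \<theta> b a - softmax_mean \<theta> (score \<theta> b))\<^sup>2)"
      unfolding mean_v unfolding v_def by (auto simp: power2_eq_square algebra_simps)
    then show ?thesis unfolding score_var_def by (simp add: softmax_mean_cmult)
  qed
  have "(\<eta> * R)\<^sup>2 \<le> \<eta>\<^sup>2"
    using R \<eta> by (simp add: power_mult_distrib mult_left_le power_le_one)
  then have "exp (2 * \<eta>) / 2 * ((\<eta> * R)\<^sup>2 * score_var \<theta> b) \<le> exp (2 * \<eta>) / 2 * \<eta>\<^sup>2 * score_var \<theta> b"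
    using score_var_nonneg[of \<theta> b] by (simp add: mult_right_mono)
  then show ?thesis
    using softmax_mean_second_order_lower_bound[where r=r and v=v and \<theta>=\<theta>, OF r0 r1 v_le]
    unfolding step subopt_eq cov var by linarith
qed

section \<open>Integrals over events and conditional expectations\<close>

lemma distr_restrict_eq_density_const:
  fixes M :: "'w measure" and Pb :: "real measure" and R :: "'w \<Rightarrow> real"
  assumes M: "prob_space M" and Pb: "prob_space Pb" and Pb_sets: "sets Pb = sets borel"
    and E: "E \<in> sets M" and R: "R \<in> borel_measurable M"
    and law: "\<And>S. S \<in> sets borel \<Longrightarrow> measure M (E \<inter> {\<omega>\<in>space M. R \<omega> \<in> S}) = measure M E * measure Pb S"
  shows "distr (density M (\<lambda>\<omega>. ennreal (indicator E \<omega>))) borel R = density Pb (\<lambda>_. ennreal (measure M E))"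
proof (rule measure_eqI)
  interpret M: prob_space M by (rule M)
  interpret P: prob_space Pb by (rule Pb)
  show "sets (distr (density M (\<lambda>\<omega>. ennreal (indicator E \<omega>))) borel R) = sets (density Pb (\<lambda>_. ennreal (measure M E)))"
    using Pb_sets by simp
  fix S assume "S \<in> sets (distr (density M (\<lambda>\<omega>. ennreal (indicator E \<omega>))) borel R)"
  then have S: "S \<in> sets borel" by simp
  have pre: "R -` S \<inter> space M \<in> sets M" using R S by (rule measurable_sets)
  have "emeasure (distr (density M (\<lambda>\<omega>. ennreal (indicator E \<omega>))) borel R) S
      = (\<integral>\<^sup>+ \<omega>. indicator (E \<inter> (R -` S \<inter> space M)) \<omega> \<partial>M)"
    using R S pre E
    by (simp add: emeasure_distr emeasure_density ennreal_indicator indicator_inter_arith)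
  also have "\<dots> = emeasure M (E \<inter> {\<omega>\<in>space M. R \<omega> \<in> S})"
    using pre E by (simp add: Int_def conj_commute)
  also have "\<dots> = ennreal (measure M E) * emeasure Pb S"
    using law[OF S] by (simp add: M.emeasure_eq_measure P.emeasure_eq_measure ennreal_mult)
  also have "\<dots> = emeasure (density Pb (\<lambda>_. ennreal (measure M E))) S"
    using S Pb_sets by (simp add: emeasure_density_const)
  finally show "emeasure (distr (density M (\<lambda>\<omega>. ennreal (indicator E \<omega>))) borel R) S
      = emeasure (density Pb (\<lambda>_. ennreal (measure M E))) S" .
qed

lemma integral_indicator_mult_eq_measure_mult_mean:
  fixes M :: "'w measure" and Pb :: "real measure" and R :: "'w \<Rightarrow> real"
  assumes M: "prob_space M" and Pb: "prob_space Pb" and Pb_sets: "sets Pb = sets borel"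
    and E: "E \<in> sets M" and R: "R \<in> borel_measurable M"
    and law: "\<And>S. S \<in> sets borel \<Longrightarrow> measure M (E \<inter> {\<omega>\<in>space M. R \<omega> \<in> S}) = measure M E * measure Pb S"
  shows "(\<integral>\<omega>. indicator E \<omega> * R \<omega> \<partial>M) = measure M E * (\<integral>x. x \<partial>Pb)"
proof -
  have "(\<integral>\<omega>. indicator E \<omega> * R \<omega> \<partial>M) = (\<integral>x. x \<partial>distr (density M (\<lambda>\<omega>. ennreal (indicator E \<omega>))) borel R)"
    using R E by (simp add: integral_distr integral_density)
  also have "\<dots> = (\<integral>x. x \<partial>density Pb (\<lambda>_. ennreal (measure M E)))"
    by (simp only: distr_restrict_eq_density_const[OF assms])
  also have "\<dots> = (\<integral>x. measure M E * x \<partial>Pb)"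
    using Pb_sets by (subst integral_density) (auto cong: measurable_cong_sets)
  finally show ?thesis by simp
qed

lemma integral_mult_eq_if_set_integrals_eq:
  fixes M Fs :: "'w measure" and X Y \<phi> :: "'w \<Rightarrow> real" and B C :: real
  assumes M: "prob_space M" and sub: "subalgebra M Fs"
    and Xm: "X \<in> borel_measurable M" and Xb: "AE \<omega> in M. \<bar>X \<omega>\<bar> \<le> B"
    and Ym: "Y \<in> borel_measurable Fs" and Yb: "\<And>\<omega>. \<omega> \<in> space M \<Longrightarrow> \<bar>Y \<omega>\<bar> \<le> B"
    and seteq: "\<And>A. A \<in> sets Fs \<Longrightarrow> (\<integral>\<omega>. indicator A \<omega> * X \<omega> \<partial>M) = (\<integral>\<omega>. indicator A \<omega> * Y \<omega> \<partial>M)"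
    and phim: "\<phi> \<in> borel_measurable Fs" and phib: "\<And>\<omega>. \<omega> \<in> space M \<Longrightarrow> \<bar>\<phi> \<omega>\<bar> \<le> C"
  shows "(\<integral>\<omega>. \<phi> \<omega> * X \<omega> \<partial>M) = (\<integral>\<omega>. \<phi> \<omega> * Y \<omega> \<partial>M)"
proof -
  interpret M: prob_space M by (rule M)
  interpret S: finite_measure_subalgebra M Fs
    by unfold_locales (rule sub)
  have YmM: "Y \<in> borel_measurable M" by (rule measurable_from_subalg[OF sub Ym])
  have phimM: "\<phi> \<in> borel_measurable M" by (rule measurable_from_subalg[OF sub phim])
  have intX: "integrable M X"
    by (rule M.integrable_const_bound[where B=B]) (use Xb Xm in simp_all)
  have intY: "integrable M Y"
    by (rule M.integrable_const_bound[where B=B]) (use Yb YmM in simp_all)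
  obtain \<omega>0 where "\<omega>0 \<in> space M" using M.not_empty by blast
  then have C0: "0 \<le> C" using phib[of \<omega>0] by linarith
  have intPX: "integrable M (\<lambda>\<omega>. \<phi> \<omega> * X \<omega>)"
  proof (rule M.integrable_const_bound[where B="C * B"])
    show "AE x in M. norm (\<phi> x * X x) \<le> C * B"
      using Xb AE_space
    proof eventually_elim
      case (elim x)
      have "\<bar>\<phi> x\<bar> * \<bar>X x\<bar> \<le> C * B"
        by (rule mult_mono) (use elim phib[of x] C0 in simp_all)
      then show ?case by (simp add: abs_mult)
    qed
  qed (use Xm phimM in simp)
  have ae: "AE \<omega> in M. real_cond_exp M Fs X \<omega> = Y \<omega>"
  proof (rule S.real_cond_exp_charact)
    fix A assume "A \<in> sets Fs"
    then show "(LINT x:A|M. X x) = (LINT x:A|M. Y x)"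
      unfolding set_lebesgue_integral_def using seteq by simp
  qed (fact intX intY Ym)+
  have "(\<integral>\<omega>. \<phi> \<omega> * X \<omega> \<partial>M) = (\<integral>\<omega>. \<phi> \<omega> * real_cond_exp M Fs X \<omega> \<partial>M)"
    using S.real_cond_exp_intg(2)[OF intPX phim Xm] by simp
  also have "\<dots> = (\<integral>\<omega>. \<phi> \<omega> * Y \<omega> \<partial>M)"
  proof (rule integral_cong_AE)
    show "AE x in M. \<phi> x * real_cond_exp M Fs X x = \<phi> x * Y x" using ae by eventually_elim simp
  qed (use phimM YmM in simp_all)
  finally show ?thesis .
qed

lemma measurable_softmax:
  assumes "\<And>a. (\<lambda>\<omega>. \<theta> \<omega> a) \<in> borel_measurable N"
  shows "(\<lambda>\<omega>. softmax (\<theta> \<omega>) a) \<in> borel_measurable N"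
  unfolding softmax_def using assms by measurable

lemma measurable_softmax_mean:
  assumes "\<And>a. (\<lambda>\<omega>. \<theta> \<omega> a) \<in> borel_measurable N" and h: "\<And>a. (\<lambda>\<omega>. h \<omega> a) \<in> borel_measurable N"
  shows "(\<lambda>\<omega>. softmax_mean (\<theta> \<omega>) (h \<omega>)) \<in> borel_measurable N"
proof -
  note [measurable] = measurable_softmax[OF assms(1)] h
  show ?thesis unfolding softmax_mean_def by measurable
qed

lemma measurable_score:
  assumes "\<And>a. (\<lambda>\<omega>. \<theta> \<omega> a) \<in> borel_measurable N"
  shows "(\<lambda>\<omega>. score (\<theta> \<omega>) b a) \<in> borel_measurable N"
proof -
  note [measurable] = measurable_softmax[OF assms]
  show ?thesis unfolding score_def by measurable
qed

lemma measurable_score_cov: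
  assumes \<theta>: "\<And>a. (\<lambda>\<omega>. \<theta> \<omega> a) \<in> borel_measurable N"
  shows "(\<lambda>\<omega>. score_cov r (\<theta> \<omega>) b) \<in> borel_measurable N"
proof -
  note [measurable] = measurable_score[OF \<theta>]
    measurable_softmax_mean[OF \<theta>, of "\<lambda>\<omega> a. r a * score (\<theta> \<omega>) b a"]
    measurable_softmax_mean[OF \<theta>, of "\<lambda>\<omega>. r"]
    measurable_softmax_mean[OF \<theta>, of "\<lambda>\<omega>. score (\<theta> \<omega>) b"]
  show ?thesis unfolding score_cov_def by measurable
qed

lemma measurable_score_var:
  assumes \<theta>: "\<And>a. (\<lambda>\<omega>. \<theta> \<omega> a) \<in> borel_measurable N"
  shows "(\<lambda>\<omega>. score_var (\<theta> \<omega>) b) \<in> borel_measurable N"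
proof -
  note [measurable] = measurable_score[OF \<theta>] measurable_softmax_mean[OF \<theta>, of "\<lambda>\<omega>. score (\<theta> \<omega>) b"]
  show ?thesis unfolding score_var_def by (rule measurable_softmax_mean[OF \<theta>]) measurable
qed

lemma measurable_grad_norm_sq:
  assumes \<theta>: "\<And>a. (\<lambda>\<omega>. \<theta> \<omega> a) \<in> borel_measurable N"
  shows "(\<lambda>\<omega>. grad_norm_sq r (\<theta> \<omega>)) \<in> borel_measurable N"
proof -
  note [measurable] = measurable_softmax[OF \<theta>] measurable_softmax_mean[OF \<theta>, of "\<lambda>\<omega>. r"]
  show ?thesis unfolding grad_norm_sq_def by measurable
qed

lemma measurable_subopt:
  assumes \<theta>: "\<And>a. (\<lambda>\<omega>. \<theta> \<omega> a) \<in> borel_measurable N"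
  shows "(\<lambda>\<omega>. subopt r astar (\<theta> \<omega>)) \<in> borel_measurable N"
proof -
  note [measurable] = measurable_softmax_mean[OF \<theta>, of "\<lambda>\<omega>. r"]
  show ?thesis unfolding subopt_eq by measurable
qed

lemma two_mult_le_of_sq_le_mult:
  fixes x y z l :: real
  assumes y: "0 \<le> y" and z: "0 \<le> z" and sq: "x\<^sup>2 \<le> y * z" and l: "0 < l"
  shows "2 * x \<le> l * y + z / l"
proof (rule power2_le_imp_le)
  have "(l * y + z / l)\<^sup>2 = (l * y - z / l)\<^sup>2 + 4 * (y * z)"
    using l by (simp add: power2_eq_square field_simps)
  moreover have "(2 * x)\<^sup>2 = 4 * x\<^sup>2" by simp
  ultimately show "(2 * x)\<^sup>2 \<le> (l * y + z / l)\<^sup>2"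
    using sq zero_le_power2[of "l * y - z / l"] by linarith
  show "0 \<le> l * y + z / l" using y z l by simp
qed

lemma integral_sq_le_integral_mult_integral:
  fixes X Y Z :: "'w \<Rightarrow> real"
  assumes int: "integrable M X" "integrable M Y" "integrable M Z"
    and nonneg: "\<And>\<omega>. \<omega> \<in> space M \<Longrightarrow> 0 \<le> X \<omega>" "\<And>\<omega>. \<omega> \<in> space M \<Longrightarrow> 0 \<le> Y \<omega>"
      "\<And>\<omega>. \<omega> \<in> space M \<Longrightarrow> 0 \<le> Z \<omega>"
    and sq: "\<And>\<omega>. \<omega> \<in> space M \<Longrightarrow> (X \<omega>)\<^sup>2 \<le> Y \<omega> * Z \<omega>"
    and Z: "0 < (\<integral>\<omega>. Z \<omega> \<partial>M)"
  shows "(\<integral>\<omega>. X \<omega> \<partial>M)\<^sup>2 \<le> (\<integral>\<omega>. Y \<omega> \<partial>M) * (\<integral>\<omega>. Z \<omega> \<partial>M)"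
proof (cases "(\<integral>\<omega>. X \<omega> \<partial>M) = 0")
  case False
  define IX IY IZ where "IX = (\<integral>\<omega>. X \<omega> \<partial>M)" and "IY = (\<integral>\<omega>. Y \<omega> \<partial>M)" and "IZ = (\<integral>\<omega>. Z \<omega> \<partial>M)"
  have "0 \<le> IX" unfolding IX_def by (rule integral_nonneg_AE) (use nonneg in auto)
  with False have IX: "0 < IX" unfolding IX_def by simp
  define l where "l = IZ / IX"
  have l: "0 < l" unfolding l_def IZ_def using IX Z by simp
  have "2 * IX = (\<integral>\<omega>. 2 * X \<omega> \<partial>M)" unfolding IX_def by simp
  also have "\<dots> \<le> (\<integral>\<omega>. l * Y \<omega> + Z \<omega> / l \<partial>M)"
  proof (rule integral_mono)
    show "2 * X \<omega> \<le> l * Y \<omega> + Z \<omega> / l" if "\<omega> \<in> space M" for \<omega>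
      by (rule two_mult_le_of_sq_le_mult[OF nonneg(2,3)[OF that] sq[OF that] l])
  qed (use int in simp_all)
  also have "\<dots> = l * IY + IX"
    using int l IX Z unfolding IY_def IZ_def l_def by simp
  finally have "IX * IX \<le> IZ * IY" unfolding l_def using IX by (simp add: field_simps)
  then show ?thesis unfolding IX_def IY_def IZ_def by (simp add: power2_eq_square mult.commute)
next
  case True
  have "0 \<le> (\<integral>\<omega>. Y \<omega> \<partial>M)" by (rule integral_nonneg_AE) (use nonneg in auto)
  then show ?thesis using True Z by simp
qed

section \<open>The scalar recursion\<close>

lemma geometric_rate_facts:
  fixes \<beta> :: real and T :: nat
  assumes \<beta>: "1 \<le> \<beta>" "\<beta> < real T"
  defines "L \<equiv> ln (real T / \<beta>)" and "\<alpha> \<equiv> (\<beta> / real T) powr (1 / real T)"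
  shows "0 < L" "0 < \<alpha>" "\<alpha> < 1" "1 / 2 \<le> \<alpha>" "\<alpha> ^ T = \<beta> / real T" "1 - \<alpha> \<le> L / real T"
    "\<And>k. \<alpha> ^ k = exp (- real k * L / real T)"
proof -
  have T: "real T > 0" using \<beta> by linarith
  show L: "0 < L" unfolding L_def using \<beta> by (simp add: field_simps)
  have ln_ratio: "ln (\<beta> / real T) = - L" unfolding L_def using \<beta> T by (simp add: ln_div)
  have \<alpha>_exp: "\<alpha> = exp (- L / real T)" unfolding \<alpha>_def powr_def using \<beta> T ln_ratio by simp
  show "0 < \<alpha>" unfolding \<alpha>_exp by simp
  show "\<alpha> < 1" unfolding \<alpha>_exp using L T by simp
  have "real T < 2 ^ T" using less_exp[of T] by (metis of_nat_less_iff of_nat_numeral of_nat_power)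
  then have "ln (real T) \<le> real T * ln 2" using T by (simp add: ln_realpow[symmetric])
  moreover have "L \<le> ln (real T)" unfolding L_def using \<beta> T by (simp add: ln_div)
  ultimately have "L / real T \<le> ln 2" using T by (simp add: divide_le_eq mult.commute)
  then have "exp (- ln 2) \<le> exp (- L / real T)" by simp
  then show "1 / 2 \<le> \<alpha>" unfolding \<alpha>_exp by (simp add: exp_minus)
  show \<alpha>_pow: "\<And>k. \<alpha> ^ k = exp (- real k * L / real T)"
    unfolding \<alpha>_exp by (simp add: exp_of_nat_mult[symmetric])
  show "\<alpha> ^ T = \<beta> / real T" unfolding \<alpha>_pow using T \<beta> ln_ratio[symmetric] by simp
  show "1 - \<alpha> \<le> L / real T" unfolding \<alpha>_exp using exp_ge_add_one_self[of "- L / real T"] by simp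
qed

lemma geometric_step_size_bounds:
  fixes \<beta> \<eta>0 :: real and T t :: nat
  assumes "0 < \<eta>0" "1 \<le> \<beta>" "\<beta> < real T"
  shows "0 < \<eta>0 * ((\<beta> / real T) powr (1 / real T)) ^ t"
    and "\<eta>0 * ((\<beta> / real T) powr (1 / real T)) ^ t \<le> \<eta>0"
  using geometric_rate_facts(2,3)[OF assms(2,3)] assms(1) by (auto simp: power_le_one mult_left_le)

lemma sum_power_ge:
  fixes \<alpha> L :: real and t T :: nat
  assumes "0 < \<alpha>" "\<alpha> < 1" "1 - \<alpha> \<le> L / real T" "0 < L" "T > 0" "t \<le> T"
  shows "(\<Sum>s\<in>{Suc t..T}. \<alpha> ^ s) \<ge> (\<alpha> ^ Suc t - \<alpha> ^ Suc T) * real T / L"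
proof -
  have sum: "(1 - \<alpha>) * (\<Sum>s\<in>{Suc t..T}. \<alpha> ^ s) = \<alpha> ^ Suc t - \<alpha> ^ Suc T"
  proof (cases "Suc t \<le> T")
    case True then show ?thesis by (rule sum_gp_multiplied)
  next
    case False
    then have "t = T" using assms by simp
    then show ?thesis by simp
  qed
  have "0 \<le> \<alpha> ^ Suc t - \<alpha> ^ Suc T" using assms by (simp add: power_decreasing)
  then have "(\<alpha> ^ Suc t - \<alpha> ^ Suc T) / (L / real T) \<le> (\<alpha> ^ Suc t - \<alpha> ^ Suc T) / (1 - \<alpha>)"
    using assms by (intro divide_left_mono) auto
  also have "\<dots> = (\<Sum>s\<in>{Suc t..T}. \<alpha> ^ s)" using sum assms by (simp add: field_simps)
  finally show ?thesis by simp
qed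

lemma exp_neg_le_four_div_sq:
  fixes x :: real
  assumes "0 < x"
  shows "exp (- x) \<le> 4 / ((exp 1)\<^sup>2 * x\<^sup>2)"
proof -
  have "x / 2 \<le> exp (x / 2 - 1)" using exp_ge_add_one_self[of "x / 2 - 1"] by simp
  then have "x / 2 \<le> exp (x / 2) / exp 1" by (simp add: exp_diff)
  then have "exp 1 * (x / 2) \<le> exp (x / 2)" by (simp add: field_simps)
  then have "(exp 1 * (x / 2))\<^sup>2 \<le> (exp (x / 2))\<^sup>2" by (rule power_mono) (use assms in simp)
  also have "(exp (x / 2))\<^sup>2 = exp x" by (simp add: power2_eq_square exp_add[symmetric])
  finally have "(exp 1)\<^sup>2 * x\<^sup>2 \<le> 4 * exp x" by (simp add: power_mult_distrib field_simps)
  then show ?thesis using assms by (simp add: exp_minus field_simps)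
qed

lemma perturbed_contraction_unroll:
  fixes G c B :: "nat \<Rightarrow> real" and T :: nat
  assumes step: "\<And>t. 1 \<le> t \<Longrightarrow> t \<le> T \<Longrightarrow> G (Suc t) \<le> (1 - c t) * G t + B t * G t"
    and c: "\<And>t. c t \<le> 1" and G: "\<And>t. 0 \<le> G t"
  shows "n \<le> T \<Longrightarrow> G (Suc n) \<le> G 1 * exp (- (\<Sum>s\<in>{1..n}. c s))
            + (\<Sum>t\<in>{1..n}. B t * G t * exp (- (\<Sum>s\<in>{Suc t..n}. c s)))"
proof (induction n)
  case (Suc n)
  define X where "X = G 1 * exp (- (\<Sum>s\<in>{1..n}. c s))
    + (\<Sum>t\<in>{1..n}. B t * G t * exp (- (\<Sum>s\<in>{Suc t..n}. c s)))"
  have IH: "G (Suc n) \<le> X" using Suc by (simp add: X_def)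
  have "G (Suc (Suc n)) \<le> (1 - c (Suc n)) * G (Suc n) + B (Suc n) * G (Suc n)"
    using step[of "Suc n"] Suc.prems by simp
  also have "(1 - c (Suc n)) * G (Suc n) \<le> exp (- c (Suc n)) * X"
  proof (rule mult_mono[OF _ IH])
    show "1 - c (Suc n) \<le> exp (- c (Suc n))" using exp_ge_add_one_self[of "- c (Suc n)"] by simp
  qed (use c[of "Suc n"] G[of "Suc n"] in auto)
  also have "exp (- c (Suc n)) * X = G 1 * exp (- (\<Sum>s\<in>{1..Suc n}. c s))
       + (\<Sum>t\<in>{1..n}. B t * G t * exp (- (\<Sum>s\<in>{Suc t..Suc n}. c s)))"
  proof -
    have tail: "- (\<Sum>s\<in>{Suc t..Suc n}. c s) = - c (Suc n) + - (\<Sum>s\<in>{Suc t..n}. c s)"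
      if "t \<le> n" for t
      using that by (simp add: sum.cl_ivl_Suc)
    have head: "exp (- c (Suc n)) * exp (- (\<Sum>s\<in>{1..n}. c s)) = exp (- (\<Sum>s\<in>{1..Suc n}. c s))"
      by (simp add: sum.cl_ivl_Suc exp_add[symmetric] add.commute)
    have "exp (- c (Suc n)) * (\<Sum>t\<in>{1..n}. B t * G t * exp (- (\<Sum>s\<in>{Suc t..n}. c s)))
        = (\<Sum>t\<in>{1..n}. B t * G t * exp (- (\<Sum>s\<in>{Suc t..Suc n}. c s)))"
      unfolding sum_distrib_left
      by (rule sum.cong[OF refl]) (simp add: tail exp_add[symmetric] mult_ac)
    then show ?thesis unfolding X_def distrib_left head[symmetric] by (simp add: mult_ac)
  qed
  finally show ?case by simp
qed simp

text \<open>Once \<open>G \<ge> \<epsilon>\<close>, the bound \<open>\<mu> G\<^sup>2 \<le> D\<close> turns the descent step into a contraction; the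
  second-order term is absorbed into it unless the step is large, and is then kept as a perturbation.\<close>
lemma descent_step_imp_contraction:
  fixes G' g d \<eta> K \<mu> \<epsilon> :: real
  assumes step: "G' \<le> g - \<eta> * d + K * \<eta>\<^sup>2 * d"
    and lower: "\<mu> * g\<^sup>2 \<le> d" and upper: "d \<le> g" and "0 \<le> d" and "\<epsilon> \<le> g"
    and "0 < \<eta>" "0 \<le> K" "0 \<le> \<mu>" "0 \<le> \<epsilon>"
  shows "G' \<le> (1 - \<eta> * \<mu> * \<epsilon> / 2) * g + (if 1 / 2 < K * \<eta> then K * \<eta>\<^sup>2 else 0) * g"
proof -
  have "\<mu> * (\<epsilon> * g) \<le> \<mu> * g\<^sup>2"
    using assms by (intro mult_left_mono) (auto simp: power2_eq_square intro: mult_right_mono)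
  then have contraction: "\<eta> * \<mu> * \<epsilon> / 2 * g \<le> \<eta> * d / 2"
    using lower \<open>0 < \<eta>\<close> mult_left_mono[of "\<mu> * (\<epsilon> * g)" d \<eta>] by (simp add: mult_ac)
  show ?thesis
  proof (cases "1 / 2 < K * \<eta>")
    case True
    have "K * \<eta>\<^sup>2 * d \<le> K * \<eta>\<^sup>2 * g" using upper assms by (intro mult_left_mono) auto
    then have "G' \<le> g - \<eta> * \<mu> * \<epsilon> / 2 * g + K * \<eta>\<^sup>2 * g"
      using step contraction \<open>0 < \<eta>\<close> \<open>0 \<le> d\<close> mult_nonneg_nonneg[of \<eta> d] by linarith
    then show ?thesis using True by (simp add: algebra_simps)
  next
    case False
    then have "K * \<eta> * (\<eta> * d) \<le> 1 / 2 * (\<eta> * d)" using assms by (intro mult_right_mono) auto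
    then have "K * \<eta>\<^sup>2 * d \<le> \<eta> * d / 2" by (simp add: power2_eq_square mult_ac)
    then have "G' \<le> g - \<eta> * \<mu> * \<epsilon> / 2 * g" using step contraction by linarith
    then show ?thesis using False by (simp add: algebra_simps)
  qed
qed

lemma exp_neg_sum_geometric_tail_le:
  fixes T t :: nat and \<beta> \<epsilon> \<kappa> :: real
  defines "L \<equiv> ln (real T / \<beta>)" and "\<alpha> \<equiv> (\<beta> / real T) powr (1 / real T)"
  assumes \<beta>: "1 \<le> \<beta>" "\<beta> < real T" and t: "t \<le> T" and \<epsilon>: "0 < \<epsilon>" "\<epsilon> < 1" and \<kappa>: "0 < \<kappa>"
  shows "exp (- (\<Sum>s\<in>{Suc t..T}. \<epsilon> * \<alpha> ^ s / \<kappa>))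
    \<le> exp (2 * \<beta> / (\<kappa> * L)) * exp (- (\<epsilon> * real T * \<alpha> ^ Suc t / (\<kappa> * L)))"
proof -
  note rate = geometric_rate_facts[OF \<beta>, folded L_def \<alpha>_def]
  have T: "0 < real T" using \<beta> by linarith
  have "\<epsilon> * real T * \<alpha> ^ Suc t / (\<kappa> * L) - \<epsilon> * \<alpha> * \<beta> / (\<kappa> * L)
      = (\<epsilon> / \<kappa>) * ((\<alpha> ^ Suc t - \<alpha> ^ Suc T) * real T / L)"
    using rate(1,5) T \<kappa> by (simp add: field_simps)
  also have "\<dots> \<le> (\<epsilon> / \<kappa>) * (\<Sum>s\<in>{Suc t..T}. \<alpha> ^ s)"
    using rate T t \<epsilon> \<kappa> by (intro mult_left_mono sum_power_ge) auto
  also have "\<dots> = (\<Sum>s\<in>{Suc t..T}. \<epsilon> * \<alpha> ^ s / \<kappa>)"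
    by (simp add: sum_distrib_left)
  finally have "\<epsilon> * real T * \<alpha> ^ Suc t / (\<kappa> * L) - \<epsilon> * \<alpha> * \<beta> / (\<kappa> * L)
      \<le> (\<Sum>s\<in>{Suc t..T}. \<epsilon> * \<alpha> ^ s / \<kappa>)" .
  moreover have "\<epsilon> * \<alpha> * \<beta> / (\<kappa> * L) \<le> 2 * \<beta> / (\<kappa> * L)"
  proof (rule divide_right_mono)
    have "\<epsilon> * \<alpha> \<le> 1 * 1" using \<epsilon> rate by (intro mult_mono) auto
    then show "\<epsilon> * \<alpha> * \<beta> \<le> 2 * \<beta>" using \<beta> by (intro mult_right_mono) auto
  qed (use \<kappa> rate in simp)
  ultimately have "- (\<Sum>s\<in>{Suc t..T}. \<epsilon> * \<alpha> ^ s / \<kappa>)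
      \<le> 2 * \<beta> / (\<kappa> * L) + - (\<epsilon> * real T * \<alpha> ^ Suc t / (\<kappa> * L))"
    by linarith
  then show ?thesis unfolding exp_add[symmetric] by simp
qed

lemma large_step_index_le:
  fixes T t :: nat and \<eta>0 \<beta> A \<Delta> :: real
  defines "L \<equiv> ln (real T / \<beta>)" and "\<alpha> \<equiv> (\<beta> / real T) powr (1 / real T)"
    and "\<rho> \<equiv> 8 * A powr (3/2) / \<Delta>\<^sup>2"
  assumes \<beta>: "1 \<le> \<beta>" "\<beta> < real T" and \<eta>0: "0 < \<eta>0" and A: "2 \<le> A" and \<Delta>: "0 < \<Delta>"
    and large: "1 / 2 < 10 * (A - 1) / \<Delta>\<^sup>2 * (\<eta>0 * \<alpha> ^ t)"
  shows "real t \<le> real T * max (ln (4 * \<rho> * \<eta>0) / L) 0 - 1"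
proof -
  note rate = geometric_rate_facts[OF \<beta>, folded L_def \<alpha>_def]
  have T: "0 < real T" using \<beta> by linarith
  define y where "y = \<eta>0 * \<alpha> ^ t"
  have y: "0 < y" unfolding y_def using \<eta>0 rate by simp
  have "\<Delta>\<^sup>2 < 20 * (A - 1) * y" using large \<Delta> unfolding y_def by (simp add: field_simps)
  also have "\<dots> \<le> 112 / 5 * A * y" using y A by (intro mult_right_mono) auto
  finally have gap: "\<Delta>\<^sup>2 < 112 / 5 * A * y" .
  have "sqrt ((7 / 5)\<^sup>2) \<le> sqrt A" using A by (intro real_sqrt_le_mono) (simp add: power2_eq_square)
  then have "7 / 5 * (1 / 2) \<le> sqrt A * \<alpha>" using rate(4) A by (intro mult_mono) auto
  then have "32 * A * y / \<Delta>\<^sup>2 * (7 / 10) \<le> 32 * A * y / \<Delta>\<^sup>2 * (sqrt A * \<alpha>)"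
    using A y by (intro mult_left_mono) auto
  moreover have "A powr (3/2) = A * sqrt A"
    using A by (simp add: powr_add[of A 1 "1/2", simplified] powr_half_sqrt)
  then have "32 * A * y / \<Delta>\<^sup>2 * (sqrt A * \<alpha>) = 4 * \<rho> * \<eta>0 * \<alpha> ^ Suc t"
    unfolding \<rho>_def y_def by (simp add: field_simps)
  ultimately have "32 * A * y / \<Delta>\<^sup>2 * (7 / 10) \<le> 4 * \<rho> * \<eta>0 * \<alpha> ^ Suc t"
    by simp
  moreover have "1 < 32 * A * y / \<Delta>\<^sup>2 * (7 / 10)" using gap \<Delta> by (simp add: field_simps)
  ultimately have "1 < 4 * \<rho> * \<eta>0 * \<alpha> ^ Suc t" by linarith
  then have "0 < ln (4 * \<rho> * \<eta>0 * \<alpha> ^ Suc t)" by (rule ln_gt_zero)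
  moreover have "0 < \<rho>" unfolding \<rho>_def using A \<Delta> by simp
  then have "ln (4 * \<rho> * \<eta>0 * \<alpha> ^ Suc t) = ln (4 * \<rho> * \<eta>0) + ln (\<alpha> ^ Suc t)"
    using \<eta>0 rate by (intro ln_mult_pos) auto
  ultimately have "0 < ln (4 * \<rho> * \<eta>0) + ln (\<alpha> ^ Suc t)" by simp
  moreover have "ln (\<alpha> ^ Suc t) = - (real (Suc t) * L / real T)"
    unfolding rate(7) by (simp only: ln_exp minus_mult_left minus_divide_left)
  ultimately have "real (Suc t) * L / real T \<le> ln (4 * \<rho> * \<eta>0)" by linarith
  then have "real (Suc t) \<le> real T * (ln (4 * \<rho> * \<eta>0) / L)"
    using T rate by (simp add: field_simps)
  also have "\<dots> \<le> real T * max (ln (4 * \<rho> * \<eta>0) / L) 0" by (intro mult_left_mono) auto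
  finally show ?thesis by linarith
qed

lemma large_step_term_le:
  fixes T t :: nat and \<eta>0 \<beta> \<epsilon> \<kappa> A \<Delta> C1 C2 :: real
  defines "L \<equiv> ln (real T / \<beta>)" and "\<alpha> \<equiv> (\<beta> / real T) powr (1 / real T)"
    and "\<rho> \<equiv> 8 * A powr (3/2) / \<Delta>\<^sup>2"
  assumes C1_def: "C1 = exp (2 * \<beta> / (\<kappa> * L))"
    and C2_def: "C2 = C1 * (32 * \<rho> * \<kappa>\<^sup>2 / (5 * (exp 1)\<^sup>2 * \<alpha>\<^sup>2)) * L\<^sup>2"
    and \<beta>: "1 \<le> \<beta>" "\<beta> < real T" and \<eta>0: "0 < \<eta>0" "\<eta>0 \<le> 1 / 18" and A: "1 \<le> A"
    and \<Delta>: "0 < \<Delta>" and t: "t \<le> T" and \<epsilon>: "0 < \<epsilon>" "\<epsilon> < 1" and \<kappa>: "0 < \<kappa>"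
  shows "10 * (A - 1) / \<Delta>\<^sup>2 * (\<eta>0 * \<alpha> ^ t)\<^sup>2 * exp (- (\<Sum>s\<in>{Suc t..T}. \<epsilon> * \<alpha> ^ s / \<kappa>))
    \<le> C2 / (\<epsilon>\<^sup>2 * (real T)\<^sup>2)"
proof -
  note rate = geometric_rate_facts[OF \<beta>, folded L_def \<alpha>_def]
  have T: "0 < real T" using \<beta> by linarith
  define K where "K = 10 * (A - 1) / \<Delta>\<^sup>2"
  define x where "x = \<epsilon> * real T * \<alpha> ^ Suc t / (\<kappa> * L)"
  have K: "0 \<le> K" unfolding K_def using A by simp
  have x: "0 < x" unfolding x_def using \<epsilon> T rate \<kappa> by simp
  have "K * (\<eta>0 * \<alpha> ^ t)\<^sup>2 * exp (- (\<Sum>s\<in>{Suc t..T}. \<epsilon> * \<alpha> ^ s / \<kappa>))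
      \<le> K * (\<eta>0 * \<alpha> ^ t)\<^sup>2 * (C1 * exp (- x))"
    using exp_neg_sum_geometric_tail_le[OF \<beta> t \<epsilon> \<kappa>] K
    unfolding C1_def x_def L_def \<alpha>_def by (intro mult_left_mono) auto
  also have "\<dots> \<le> K * (\<eta>0 * \<alpha> ^ t)\<^sup>2 * (C1 * (4 / ((exp 1)\<^sup>2 * x\<^sup>2)))"
    using exp_neg_le_four_div_sq[OF x] K unfolding C1_def by (intro mult_left_mono) auto
  also have "\<dots> = C1 * (4 * K * \<eta>0\<^sup>2) * (\<kappa>\<^sup>2 * L\<^sup>2 / ((exp 1)\<^sup>2 * \<epsilon>\<^sup>2 * (real T)\<^sup>2 * \<alpha>\<^sup>2))"
    unfolding x_def using rate \<epsilon> T \<kappa> by (simp add: field_simps power2_eq_square)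
  also have "\<dots> \<le> C1 * (32 * \<rho> / 5) * (\<kappa>\<^sup>2 * L\<^sup>2 / ((exp 1)\<^sup>2 * \<epsilon>\<^sup>2 * (real T)\<^sup>2 * \<alpha>\<^sup>2))"
  proof (intro mult_right_mono mult_left_mono)
    have "A - 1 \<le> A powr (3/2)" using A powr_mono[of 1 "3/2" A] by simp
    moreover have "\<eta>0\<^sup>2 \<le> (1 / 18)\<^sup>2" using \<eta>0 by (intro power_mono) auto
    ultimately have "(A - 1) * \<eta>0\<^sup>2 \<le> A powr (3/2) * (1 / 18)\<^sup>2" using A by (intro mult_mono) auto
    then have "40 * ((A - 1) * \<eta>0\<^sup>2) \<le> 40 * (A powr (3/2) * (1 / 18)\<^sup>2)" by simp
    also have "\<dots> \<le> 256 / 5 * A powr (3/2)" using powr_ge_zero[of A "3/2"] by (simp add: power2_eq_square)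
    finally have "40 * ((A - 1) * \<eta>0\<^sup>2) \<le> 256 / 5 * A powr (3/2)" .
    then have "40 * ((A - 1) * \<eta>0\<^sup>2) / \<Delta>\<^sup>2 \<le> 256 / 5 * A powr (3/2) / \<Delta>\<^sup>2"
      by (rule divide_right_mono) simp
    moreover have "4 * K * \<eta>0\<^sup>2 = 40 * ((A - 1) * \<eta>0\<^sup>2) / \<Delta>\<^sup>2" unfolding K_def by simp
    moreover have "32 * \<rho> / 5 = 256 / 5 * A powr (3/2) / \<Delta>\<^sup>2" unfolding \<rho>_def by simp
    ultimately show "4 * K * \<eta>0\<^sup>2 \<le> 32 * \<rho> / 5" by simp
  qed (simp_all add: C1_def)
  also have "\<dots> = C2 / (\<epsilon>\<^sup>2 * (real T)\<^sup>2)"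
    unfolding C1_def C2_def using \<epsilon> T rate by (simp add: field_simps)
  finally show ?thesis unfolding K_def .
qed

lemma descent_recursion_unrolled:
  fixes G D \<eta> :: "nat \<Rightarrow> real" and T :: nat and K \<mu> \<epsilon> :: real
  assumes step: "\<And>t. 1 \<le> t \<Longrightarrow> t \<le> T \<Longrightarrow> G (Suc t) \<le> G t - \<eta> t * D t + K * (\<eta> t)\<^sup>2 * D t"
    and lower: "\<And>t. 1 \<le> t \<Longrightarrow> t \<le> T \<Longrightarrow> \<mu> * (G t)\<^sup>2 \<le> D t"
    and upper: "\<And>t. 1 \<le> t \<Longrightarrow> t \<le> T \<Longrightarrow> D t \<le> G t"
    and D_nonneg: "\<And>t. 0 \<le> D t" and G_nonneg: "\<And>t. 0 \<le> G t"
    and G_ge: "\<And>t. 1 \<le> t \<Longrightarrow> t \<le> T \<Longrightarrow> \<epsilon> \<le> G t"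
    and \<eta>: "\<And>t. 0 < \<eta> t" "\<And>t. \<eta> t * \<mu> * \<epsilon> \<le> 2"
    and "0 \<le> K" "0 \<le> \<mu>" "0 \<le> \<epsilon>"
  shows "G (Suc T) \<le> G 1 * exp (- (\<Sum>s\<in>{1..T}. \<eta> s * \<mu> * \<epsilon> / 2))
    + (\<Sum>t\<in>{1..T}. (if 1 / 2 < K * \<eta> t then K * (\<eta> t)\<^sup>2 else 0) * G t
        * exp (- (\<Sum>s\<in>{Suc t..T}. \<eta> s * \<mu> * \<epsilon> / 2)))"
proof (rule perturbed_contraction_unroll[OF _ _ G_nonneg])
  show "G (Suc t) \<le> (1 - \<eta> t * \<mu> * \<epsilon> / 2) * G t + (if 1 / 2 < K * \<eta> t then K * (\<eta> t)\<^sup>2 else 0) * G t"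
    if "1 \<le> t" "t \<le> T" for t
    by (rule descent_step_imp_contraction[OF step lower upper D_nonneg G_ge]) (use that \<eta> assms in auto)
  show "\<eta> t * \<mu> * \<epsilon> / 2 \<le> 1" for t using \<eta>(2)[of t] by simp
qed simp

theorem subopt_recursion_bound:
  fixes G D \<eta> :: "nat \<Rightarrow> real" and T :: nat and \<eta>0 \<beta> \<epsilon> A \<Delta> \<rho> \<alpha> \<mu> \<kappa> C1 C2 T0 :: real
  assumes A: "2 \<le> A" and \<Delta>: "0 < \<Delta>"
    and rho_def: "\<rho> = 8 * A powr (3/2) / \<Delta>\<^sup>2"
    and alpha_def: "\<alpha> = (\<beta> / real T) powr (1 / real T)"
    and eta_def: "\<eta> = (\<lambda>t::nat. \<eta>0 * \<alpha> ^ t)"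
    and kappa_def: "\<kappa> = 2 / (\<mu> * \<eta>0)"
    and C1_def: "C1 = exp (2 * \<beta> / (\<kappa> * ln (real T / \<beta>)))"
    and C2_def: "C2 = exp (2 * \<beta> / (\<kappa> * ln (real T / \<beta>)))
               * (32 * \<rho> * \<kappa>\<^sup>2 / (5 * (exp 1)\<^sup>2 * \<alpha>\<^sup>2)) * (ln (real T / \<beta>))\<^sup>2"
    and T0_def: "T0 = real T * max (ln (4 * \<rho> * \<eta>0) / ln (real T / \<beta>)) 0"
    and \<eta>0: "0 < \<eta>0" "\<eta>0 \<le> 1 / 18" and \<beta>: "1 \<le> \<beta>" "\<beta> < real T"
    and \<epsilon>: "0 < \<epsilon>" "\<epsilon> < 1" and \<mu>: "0 < \<mu>" "\<mu> \<le> 1"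
    and step: "\<And>t. 1 \<le> t \<Longrightarrow> t \<le> T \<Longrightarrow>
      G (Suc t) \<le> G t - \<eta> t * D t + 10 * (A - 1) / \<Delta>\<^sup>2 * (\<eta> t)\<^sup>2 * D t"
    and lower: "\<And>t. 1 \<le> t \<Longrightarrow> t \<le> T \<Longrightarrow> \<mu> * (G t)\<^sup>2 \<le> D t"
    and upper: "\<And>t. 1 \<le> t \<Longrightarrow> t \<le> T \<Longrightarrow> D t \<le> G t"
    and D_nonneg: "\<And>t. 0 \<le> D t" and G_nonneg: "\<And>t. 0 \<le> G t"
    and G_ge: "\<And>t. 1 \<le> t \<Longrightarrow> t \<le> T \<Longrightarrow> \<epsilon> \<le> G t"
  shows "G (Suc T) \<le> G 1 * C1 * exp (- (\<alpha> * \<epsilon> * real T) / (\<kappa> * ln (real T / \<beta>)))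
           + C2 * (\<Sum>t\<in>{t::nat. 1 \<le> t \<and> real t \<le> T0 - 1}. G t) / (\<epsilon>\<^sup>2 * (real T)\<^sup>2)"
proof -
  note rate = geometric_rate_facts[OF \<beta>, folded alpha_def]
  define K where "K = 10 * (A - 1) / \<Delta>\<^sup>2"
  define S where "S = {t::nat. 1 \<le> t \<and> real t \<le> T0 - 1}"
  have \<kappa>: "0 < \<kappa>" unfolding kappa_def using \<mu> \<eta>0 by simp
  have C2: "0 \<le> C2" unfolding C2_def rho_def using A by simp
  have rate_eq: "\<eta> s * \<mu> * \<epsilon> / 2 = \<epsilon> * \<alpha> ^ s / \<kappa>" for s
    unfolding eta_def kappa_def using \<mu> \<eta>0 by (simp add: field_simps)
  have \<eta>: "0 < \<eta> t" "\<eta> t \<le> \<eta>0" for t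
    unfolding eta_def alpha_def using geometric_step_size_bounds[OF \<eta>0(1) \<beta>] by auto
  have rate_le: "\<eta> t * \<mu> * \<epsilon> \<le> 2" for t
  proof -
    have "\<eta> t * \<mu> * \<epsilon> \<le> 1 * 1 * 1" using \<eta>[of t] \<eta>0 \<mu> \<epsilon> by (intro mult_mono) auto
    then show ?thesis by simp
  qed
  have "G (Suc T) \<le> G 1 * exp (- (\<Sum>s\<in>{1..T}. \<epsilon> * \<alpha> ^ s / \<kappa>))
      + (\<Sum>t\<in>{1..T}. (if 1 / 2 < K * \<eta> t then K * (\<eta> t)\<^sup>2 else 0) * G t
          * exp (- (\<Sum>s\<in>{Suc t..T}. \<epsilon> * \<alpha> ^ s / \<kappa>)))"
    unfolding rate_eq[symmetric] K_def
    by (intro descent_recursion_unrolled[where G=G and D=D and \<eta>=\<eta> and T=T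
          and K="10 * (A - 1) / \<Delta>\<^sup>2" and \<mu>=\<mu> and \<epsilon>=\<epsilon>,
          OF step lower upper D_nonneg G_nonneg G_ge])
       (use \<eta> rate_le A \<mu> \<epsilon> in auto)
  moreover have "G 1 * exp (- (\<Sum>s\<in>{1..T}. \<epsilon> * \<alpha> ^ s / \<kappa>))
      \<le> G 1 * C1 * exp (- (\<alpha> * \<epsilon> * real T) / (\<kappa> * ln (real T / \<beta>)))"
    using exp_neg_sum_geometric_tail_le[OF \<beta> _ \<epsilon> \<kappa>, of 0] G_nonneg[of 1]
    unfolding alpha_def[symmetric] C1_def by (simp add: mult.assoc mult_left_mono mult_ac)
  moreover have "(\<Sum>t\<in>{1..T}. (if 1 / 2 < K * \<eta> t then K * (\<eta> t)\<^sup>2 else 0) * G t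
        * exp (- (\<Sum>s\<in>{Suc t..T}. \<epsilon> * \<alpha> ^ s / \<kappa>)))
      \<le> (\<Sum>t\<in>{t \<in> {1..T}. t \<in> S}. C2 / (\<epsilon>\<^sup>2 * (real T)\<^sup>2) * G t)"
    unfolding sum.inter_filter[OF finite_atLeastAtMost]
  proof (rule sum_mono)
    fix t assume t: "t \<in> {1..T}"
    show "(if 1 / 2 < K * \<eta> t then K * (\<eta> t)\<^sup>2 else 0) * G t * exp (- (\<Sum>s\<in>{Suc t..T}. \<epsilon> * \<alpha> ^ s / \<kappa>))
        \<le> (if t \<in> S then C2 / (\<epsilon>\<^sup>2 * (real T)\<^sup>2) * G t else 0)"
    proof (cases "1 / 2 < K * \<eta> t")
      case True
      have "real t \<le> T0 - 1" unfolding T0_def rho_def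
        by (rule large_step_index_le[OF \<beta> \<eta>0(1) A \<Delta>]) (use True in \<open>simp add: K_def eta_def alpha_def\<close>)
      moreover have "K * (\<eta> t)\<^sup>2 * exp (- (\<Sum>s\<in>{Suc t..T}. \<epsilon> * \<alpha> ^ s / \<kappa>)) \<le> C2 / (\<epsilon>\<^sup>2 * (real T)\<^sup>2)"
        unfolding K_def eta_def alpha_def
        by (rule large_step_term_le[OF C1_def C2_def[folded C1_def, unfolded rho_def alpha_def] \<beta> \<eta>0])
           (use A \<Delta> t \<epsilon> \<kappa> in auto)
      ultimately show ?thesis
        using True t G_nonneg[of t] mult_right_mono by (fastforce simp: S_def mult_ac)
    qed (use C2 G_nonneg in simp)
  qed
  moreover have "(\<Sum>t\<in>{t \<in> {1..T}. t \<in> S}. C2 / (\<epsilon>\<^sup>2 * (real T)\<^sup>2) * G t)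
      \<le> C2 * (\<Sum>t\<in>S. G t) / (\<epsilon>\<^sup>2 * (real T)\<^sup>2)"
  proof -
    have "finite S" unfolding S_def by (rule finite_subset[of _ "{..nat \<lceil>T0\<rceil>}"]) (auto, linarith)
    then have "(\<Sum>t\<in>{t \<in> {1..T}. t \<in> S}. C2 / (\<epsilon>\<^sup>2 * (real T)\<^sup>2) * G t)
        \<le> (\<Sum>t\<in>S. C2 / (\<epsilon>\<^sup>2 * (real T)\<^sup>2) * G t)"
      by (rule sum_mono2) (use G_nonneg C2 in auto)
    then show ?thesis by (simp add: sum_distrib_left sum_divide_distrib)
  qed
  ultimately show ?thesis unfolding S_def by linarith
qed

section \<open>The stochastic policy gradient process\<close>

lemma reward_gap_le:
  fixes r :: "'a::finite \<Rightarrow> real"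
  assumes "a \<noteq> b"
  shows "reward_gap r \<le> \<bar>r a - r b\<bar>"
proof -
  have "finite {\<bar>r a - r b\<bar> | a b. a \<noteq> b}"
    by (rule finite_subset[of _ "(\<lambda>(a, b). \<bar>r a - r b\<bar>) ` UNIV"]) auto
  then show ?thesis unfolding reward_gap_def by (rule Min_le) (use assms in auto)
qed

lemma measure_outside_unit_interval_eq_0:
  assumes "sets Q = sets borel" "AE x in Q. 0 \<le> x \<and> x \<le> (1::real)"
  shows "measure Q {x. \<not> (0 \<le> x \<and> x \<le> 1)} = 0"
proof -
  have S: "{x. \<not> (0 \<le> x \<and> x \<le> 1)} \<in> sets Q" using assms(1) by simp
  have "{x \<in> space Q. \<not> (0 \<le> x \<and> x \<le> 1)} = {x. \<not> (0 \<le> x \<and> x \<le> 1)}"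
    using sets_eq_imp_space_eq[OF assms(1)] by simp
  from AE_iff_measurable[OF S this] assms(2)
  have "emeasure Q {x. \<not> (0 \<le> x \<and> x \<le> 1)} = 0" by (rule iffD1)
  then show ?thesis by (simp add: measure_def)
qed

locale softmax_policy_gradient = prob_space M
  for M :: "'w measure" +
  fixes F :: "nat \<Rightarrow> 'w measure"
    and P :: "'a::finite \<Rightarrow> real measure"
    and r :: "'a \<Rightarrow> real"
    and astar :: 'a
    and arm :: "nat \<Rightarrow> 'w \<Rightarrow> 'a"
    and Rew :: "nat \<Rightarrow> 'w \<Rightarrow> real"
    and theta :: "nat \<Rightarrow> 'w \<Rightarrow> ('a \<Rightarrow> real)"
    and \<theta>1 :: "'a \<Rightarrow> real"
    and \<eta> :: "nat \<Rightarrow> real"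
  assumes P_prob: "\<And>a. prob_space (P a)"
    and P_sets: "\<And>a. sets (P a) = sets borel"
    and P_supp: "\<And>a. AE x in P a. 0 \<le> x \<and> x \<le> 1"
    and r_mean: "\<And>a. r a = (\<integral>x. x \<partial>P a)"
    and astar_opt: "\<And>a. r a \<le> r astar"
    and F_sub: "\<And>t. subalgebra M (F t)"
    and F_mono: "\<And>s t. s \<le> t \<Longrightarrow> sets (F s) \<subseteq> sets (F t)"
    and arm_meas: "\<And>t. arm t \<in> measurable (F (Suc t)) (count_space UNIV)"
    and Rew_meas: "\<And>t. Rew t \<in> borel_measurable (F (Suc t))"
    and arm_law: "\<And>t a B. t \<ge> 1 \<Longrightarrow> B \<in> sets (F t) \<Longrightarrow>
        measure M (B \<inter> {\<omega>\<in>space M. arm t \<omega> = a})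
          = (\<integral>\<omega>. indicator B \<omega> * softmax (theta t \<omega>) a \<partial>M)"
    and Rew_law: "\<And>t a B S. t \<ge> 1 \<Longrightarrow> B \<in> sets (F t) \<Longrightarrow> S \<in> sets borel \<Longrightarrow>
        measure M (B \<inter> {\<omega>\<in>space M. arm t \<omega> = a} \<inter> {\<omega>\<in>space M. Rew t \<omega> \<in> S})
          = measure M (B \<inter> {\<omega>\<in>space M. arm t \<omega> = a}) * measure (P a) S"
    and theta_init: "\<And>\<omega>. \<omega> \<in> space M \<Longrightarrow> theta 1 \<omega> = \<theta>1"
    and theta_step: "\<And>t \<omega>. t \<ge> 1 \<Longrightarrow> \<omega> \<in> space M \<Longrightarrow>
        theta (Suc t) \<omega> = (\<lambda>a. theta t \<omega> a + \<eta> t * ghat (theta t \<omega>) (arm t \<omega>) (Rew t \<omega>) a)"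
    and eta_nonneg: "\<And>t. 0 \<le> \<eta> t"
    and eta_le: "\<And>t. \<eta> t \<le> 1 / 18"
begin

lemma r_nonneg: "0 \<le> r a"
  unfolding r_mean by (rule integral_nonneg_AE) (use P_supp[of a] in auto)

lemma r_le_1: "r a \<le> 1"
proof -
  interpret Pa: prob_space "P a" by (rule P_prob)
  have "AE x in P a. norm x \<le> 1" using P_supp[of a] by eventually_elim auto
  moreover have "(\<lambda>x. x) \<in> borel_measurable (P a)" using P_sets[of a] by (simp cong: measurable_cong_sets)
  ultimately have "integrable (P a) (\<lambda>x. x)" by (rule Pa.integrable_const_bound)
  then have "r a \<le> (\<integral>x. 1 \<partial>P a)"
    unfolding r_mean by (rule integral_mono_AE) (use P_supp[of a] in auto)
  then show ?thesis by (simp add: Pa.prob_space)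
qed

lemma space_F [simp]: "space (F t) = space M"
  using F_sub[of t] by (simp add: subalgebra_def)

lemma borel_measurable_F_imp_M: "f \<in> borel_measurable (F t) \<Longrightarrow> f \<in> borel_measurable M"
  by (rule measurable_from_subalg[OF F_sub])

lemma theta_measurable: "1 \<le> t \<Longrightarrow> (\<lambda>\<omega>. theta t \<omega> a) \<in> borel_measurable (F t)"
proof (induction t arbitrary: a rule: dec_induct)
  case base
  have "(\<lambda>\<omega>. \<theta>1 a) \<in> borel_measurable (F 1)" by simp
  then show ?case by (rule measurable_cong[THEN iffD1, rotated]) (simp add: theta_init[unfolded One_nat_def])
next
  case (step n)
  have theta_n [measurable]: "(\<lambda>\<omega>. theta n \<omega> c) \<in> borel_measurable (F (Suc n))" for c
    using measurable_mono[where M="F n" and M'="F (Suc n)" and N=borel and N'=borel] step.IH[of c] F_mono[of n "Suc n"] by auto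
  have [measurable]: "(\<lambda>\<omega>. if arm n \<omega> = a then 1 else 0 :: real) \<in> borel_measurable (F (Suc n))"
    by (rule measurable_compose[OF arm_meas]) simp
  note [measurable] = Rew_meas measurable_softmax[OF theta_n]
  have "(\<lambda>\<omega>. theta n \<omega> a + \<eta> n * (Rew n \<omega> * ((if arm n \<omega> = a then 1 else 0) - softmax (theta n \<omega>) a)))
      \<in> borel_measurable (F (Suc n))"
    by measurable
  then show ?case
    by (rule measurable_cong[THEN iffD1, rotated])
       (use step.hyps in \<open>simp add: theta_step ghat_eq_score score_def\<close>)
qed

lemma softmax_theta_measurable: "1 \<le> t \<Longrightarrow> (\<lambda>\<omega>. softmax (theta t \<omega>) b) \<in> borel_measurable (F t)"
  by (rule measurable_softmax) (rule theta_measurable)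

definition pulled :: "nat \<Rightarrow> 'a \<Rightarrow> 'w set" where
  "pulled t b = {\<omega> \<in> space M. arm t \<omega> = b}"

lemma pulled_in_F: "pulled t b \<in> sets (F (Suc t))"
proof -
  have "arm t -` {b} \<inter> space (F (Suc t)) \<in> sets (F (Suc t))"
    by (rule measurable_sets[OF arm_meas]) simp
  then show ?thesis unfolding pulled_def by (simp add: vimage_def Int_def conj_commute)
qed

lemma pulled_in_sets: "pulled t b \<in> sets M"
  using pulled_in_F F_sub[of "Suc t"] by (auto simp: subalgebra_def)

lemma sum_mult_indicator_pulled:
  fixes h :: "'a \<Rightarrow> real"
  assumes "\<omega> \<in> space M"
  shows "(\<Sum>b\<in>UNIV. h b * indicator (pulled t b) \<omega>) = h (arm t \<omega>)"
proof -
  have "(\<Sum>b\<in>UNIV. h b * indicator (pulled t b) \<omega>) = (\<Sum>b\<in>UNIV. if b = arm t \<omega> then h b else 0)"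
    by (rule sum.cong) (auto simp: pulled_def assms)
  then show ?thesis by simp
qed

lemma Rew_in_unit_interval:
  assumes t: "1 \<le> t"
  shows "AE \<omega> in M. 0 \<le> Rew t \<omega> \<and> Rew t \<omega> \<le> 1"
proof -
  define S where "S = {x::real. \<not> (0 \<le> x \<and> x \<le> 1)}"
  have S: "S \<in> sets borel" unfolding S_def by measurable
  have Rew: "Rew t \<in> borel_measurable M" by (rule borel_measurable_F_imp_M[OF Rew_meas])
  have "pulled t a \<inter> {\<omega>\<in>space M. Rew t \<omega> \<in> S} \<in> null_sets M" for a
  proof -
    have "measure M (space M \<inter> pulled t a \<inter> {\<omega>\<in>space M. Rew t \<omega> \<in> S}) = 0"
      using Rew_law[OF t _ S, of "space M" a] measure_outside_unit_interval_eq_0[OF P_sets P_supp]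
        sets.top[of "F t"] unfolding pulled_def S_def by simp
    moreover have "pulled t a \<inter> {\<omega>\<in>space M. Rew t \<omega> \<in> S} \<in> sets M"
      using pulled_in_sets Rew S by measurable
    ultimately show ?thesis
      using pulled_in_sets by (simp add: null_sets_def emeasure_eq_measure Int_absorb1 Int_assoc)
  qed
  then have "AE \<omega> in M. \<forall>a\<in>UNIV. \<omega> \<notin> pulled t a \<inter> {\<omega>\<in>space M. Rew t \<omega> \<in> S}"
    by (intro AE_finite_allI AE_not_in) auto
  with AE_space show ?thesis by eventually_elim (auto simp: pulled_def S_def)
qed

lemma integral_mult_indicator_pulled:
  assumes t: "1 \<le> t" and f: "f \<in> borel_measurable (F t)" "\<And>\<omega>. \<omega> \<in> space M \<Longrightarrow> \<bar>f \<omega>\<bar> \<le> C"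
  shows "(\<integral>\<omega>. f \<omega> * indicator (pulled t b) \<omega> \<partial>M) = (\<integral>\<omega>. f \<omega> * softmax (theta t \<omega>) b \<partial>M)"
proof (rule integral_mult_eq_if_set_integrals_eq[OF prob_space_axioms F_sub _ _ _ _ _ f, where B=1])
  show "(\<lambda>\<omega>. softmax (theta t \<omega>) b) \<in> borel_measurable (F t)"
    by (rule softmax_theta_measurable[OF t])
  show "\<bar>softmax (theta t \<omega>) b\<bar> \<le> 1" for \<omega>
    using softmax_pos[of "theta t \<omega>" b] softmax_le_1[of "theta t \<omega>" b] by simp
  fix B assume B: "B \<in> sets (F t)"
  then have "B \<in> sets M" using F_sub[of t] by (auto simp: subalgebra_def)
  then have "(\<integral>\<omega>. indicator B \<omega> * indicator (pulled t b) \<omega> \<partial>M) = measure M (B \<inter> pulled t b)"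
    using pulled_in_sets by (simp add: indicator_inter_arith[symmetric])
  also have "\<dots> = (\<integral>\<omega>. indicator B \<omega> * softmax (theta t \<omega>) b \<partial>M)"
    unfolding pulled_def by (rule arm_law[OF t B])
  finally show "(\<integral>\<omega>. indicator B \<omega> * indicator (pulled t b) \<omega> \<partial>M)
      = (\<integral>\<omega>. indicator B \<omega> * softmax (theta t \<omega>) b \<partial>M)" .
qed (use pulled_in_sets in auto)

lemma integral_mult_indicator_pulled_Rew:
  assumes t: "1 \<le> t" and f: "f \<in> borel_measurable (F t)" "\<And>\<omega>. \<omega> \<in> space M \<Longrightarrow> \<bar>f \<omega>\<bar> \<le> C"
  shows "(\<integral>\<omega>. f \<omega> * (indicator (pulled t b) \<omega> * Rew t \<omega>) \<partial>M)
       = (\<integral>\<omega>. f \<omega> * (softmax (theta t \<omega>) b * r b) \<partial>M)"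
proof (rule integral_mult_eq_if_set_integrals_eq[OF prob_space_axioms F_sub _ _ _ _ _ f, where B=1])
  have Rew: "Rew t \<in> borel_measurable M" by (rule borel_measurable_F_imp_M[OF Rew_meas])
  then show "(\<lambda>\<omega>. indicator (pulled t b) \<omega> * Rew t \<omega>) \<in> borel_measurable M"
    using pulled_in_sets by measurable
  show "AE \<omega> in M. \<bar>indicator (pulled t b) \<omega> * Rew t \<omega>\<bar> \<le> (1::real)"
    using Rew_in_unit_interval[OF t] by eventually_elim (simp add: indicator_def)
  show "(\<lambda>\<omega>. softmax (theta t \<omega>) b * r b) \<in> borel_measurable (F t)"
    using softmax_theta_measurable[OF t, of b] by simp
  show "\<bar>softmax (theta t \<omega>) b * r b\<bar> \<le> 1" for \<omega>
    using softmax_pos[of "theta t \<omega>" b] softmax_le_1[of "theta t \<omega>" b] r_nonneg[of b] r_le_1[of b]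
    by (simp add: abs_mult mult_le_one)
  fix B assume B: "B \<in> sets (F t)"
  then have B_sets: "B \<in> sets M" using F_sub[of t] by (auto simp: subalgebra_def)
  have "(\<integral>\<omega>. indicator B \<omega> * (indicator (pulled t b) \<omega> * Rew t \<omega>) \<partial>M)
      = (\<integral>\<omega>. indicator (B \<inter> pulled t b) \<omega> * Rew t \<omega> \<partial>M)"
    by (simp add: indicator_inter_arith mult.assoc)
  also have "\<dots> = measure M (B \<inter> pulled t b) * r b"
    unfolding r_mean
    by (rule integral_indicator_mult_eq_measure_mult_mean[OF prob_space_axioms P_prob P_sets _ Rew])
       (use B_sets pulled_in_sets Rew_law[OF t B] in \<open>auto simp: pulled_def\<close>)
  also have "measure M (B \<inter> pulled t b) = (\<integral>\<omega>. indicator B \<omega> * softmax (theta t \<omega>) b \<partial>M)"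
    unfolding pulled_def by (rule arm_law[OF t B])
  also have "(\<integral>\<omega>. indicator B \<omega> * softmax (theta t \<omega>) b \<partial>M) * r b
      = (\<integral>\<omega>. indicator B \<omega> * (softmax (theta t \<omega>) b * r b) \<partial>M)"
    by (simp only: mult.assoc[symmetric] integral_mult_left_zero)
  finally show "(\<integral>\<omega>. indicator B \<omega> * (indicator (pulled t b) \<omega> * Rew t \<omega>) \<partial>M)
      = (\<integral>\<omega>. indicator B \<omega> * (softmax (theta t \<omega>) b * r b) \<partial>M)" .
qed

lemma integral_at_pulled_arm:
  assumes t: "1 \<le> t"
    and g: "\<And>b. (\<lambda>\<omega>. g (theta t \<omega>) b) \<in> borel_measurable (F t)" "\<And>\<theta> b. \<bar>g \<theta> b\<bar> \<le> C"
  shows "(\<integral>\<omega>. g (theta t \<omega>) (arm t \<omega>) \<partial>M) = (\<integral>\<omega>. softmax_mean (theta t \<omega>) (g (theta t \<omega>)) \<partial>M)"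
proof -
  have gM [measurable]: "(\<lambda>\<omega>. g (theta t \<omega>) b) \<in> borel_measurable M" for b
    by (rule borel_measurable_F_imp_M[OF g(1)])
  have smM [measurable]: "(\<lambda>\<omega>. softmax (theta t \<omega>) b) \<in> borel_measurable M" for b
    by (rule borel_measurable_F_imp_M[OF softmax_theta_measurable[OF t]])
  note [measurable] = pulled_in_sets
  have C: "0 \<le> C" by (rule order_trans[OF abs_ge_zero g(2)])
  have bounded: "integrable M h" if "h \<in> borel_measurable M" "\<And>\<omega>. \<bar>h \<omega>\<bar> \<le> C" for h
    by (rule integrable_const_bound[where B=C]) (use that in auto)
  have "(\<integral>\<omega>. g (theta t \<omega>) (arm t \<omega>) \<partial>M) = (\<integral>\<omega>. (\<Sum>b\<in>UNIV. g (theta t \<omega>) b * indicator (pulled t b) \<omega>) \<partial>M)"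
    by (rule Bochner_Integration.integral_cong[OF refl]) (rule sum_mult_indicator_pulled[symmetric])
  also have "\<dots> = (\<Sum>b\<in>UNIV. \<integral>\<omega>. g (theta t \<omega>) b * indicator (pulled t b) \<omega> \<partial>M)"
    by (rule Bochner_Integration.integral_sum) (rule bounded, measurable, use g(2) C in \<open>simp add: indicator_def\<close>)
  also have "\<dots> = (\<Sum>b\<in>UNIV. \<integral>\<omega>. g (theta t \<omega>) b * softmax (theta t \<omega>) b \<partial>M)"
    by (intro sum.cong refl integral_mult_indicator_pulled[OF t g(1), where C=C] g(2))
  also have "\<dots> = (\<integral>\<omega>. (\<Sum>b\<in>UNIV. g (theta t \<omega>) b * softmax (theta t \<omega>) b) \<partial>M)"
  proof (rule Bochner_Integration.integral_sum[symmetric], rule bounded)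
    fix \<omega> b
    have "\<bar>g (theta t \<omega>) b\<bar> * softmax (theta t \<omega>) b \<le> \<bar>g (theta t \<omega>) b\<bar> * 1"
      using softmax_le_1[of "theta t \<omega>" b] by (intro mult_left_mono) auto
    then show "\<bar>g (theta t \<omega>) b * softmax (theta t \<omega>) b\<bar> \<le> C"
      using g(2)[of "theta t \<omega>" b] softmax_pos[of "theta t \<omega>" b] by (simp add: abs_mult)
  qed measurable
  also have "\<dots> = (\<integral>\<omega>. softmax_mean (theta t \<omega>) (g (theta t \<omega>)) \<partial>M)"
    unfolding softmax_mean_def by (simp add: mult.commute)
  finally show ?thesis .
qed

lemma integral_Rew_mult_at_pulled_arm:
  assumes t: "1 \<le> t"
    and g: "\<And>b. (\<lambda>\<omega>. g (theta t \<omega>) b) \<in> borel_measurable (F t)" "\<And>\<theta> b. \<bar>g \<theta> b\<bar> \<le> C"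
  shows "(\<integral>\<omega>. Rew t \<omega> * g (theta t \<omega>) (arm t \<omega>) \<partial>M)
       = (\<integral>\<omega>. softmax_mean (theta t \<omega>) (\<lambda>b. r b * g (theta t \<omega>) b) \<partial>M)"
proof -
  have gM [measurable]: "(\<lambda>\<omega>. g (theta t \<omega>) b) \<in> borel_measurable M" for b
    by (rule borel_measurable_F_imp_M[OF g(1)])
  have smM [measurable]: "(\<lambda>\<omega>. softmax (theta t \<omega>) b) \<in> borel_measurable M" for b
    by (rule borel_measurable_F_imp_M[OF softmax_theta_measurable[OF t]])
  note [measurable] = pulled_in_sets borel_measurable_F_imp_M[OF Rew_meas]
  have "(\<integral>\<omega>. Rew t \<omega> * g (theta t \<omega>) (arm t \<omega>) \<partial>M)
      = (\<integral>\<omega>. (\<Sum>b\<in>UNIV. g (theta t \<omega>) b * (indicator (pulled t b) \<omega> * Rew t \<omega>)) \<partial>M)"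
    using sum_mult_indicator_pulled[where h="\<lambda>b. g (theta t _) b * Rew t _"]
    by (intro Bochner_Integration.integral_cong) (simp_all add: mult_ac)
  also have "\<dots> = (\<Sum>b\<in>UNIV. \<integral>\<omega>. g (theta t \<omega>) b * (indicator (pulled t b) \<omega> * Rew t \<omega>) \<partial>M)"
  proof (rule Bochner_Integration.integral_sum, rule integrable_const_bound[where B=C])
    show "AE \<omega> in M. norm (g (theta t \<omega>) b * (indicator (pulled t b) \<omega> * Rew t \<omega>)) \<le> C" for b
      using Rew_in_unit_interval[OF t]
    proof eventually_elim
      case (elim \<omega>)
      then have "\<bar>g (theta t \<omega>) b\<bar> * \<bar>indicator (pulled t b) \<omega> * Rew t \<omega>\<bar> \<le> C * 1"
        using g(2) by (intro mult_mono) (auto simp: indicator_def order_trans[OF abs_ge_zero g(2)])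
      then show ?case by (simp add: abs_mult)
    qed
  qed measurable
  also have "\<dots> = (\<Sum>b\<in>UNIV. \<integral>\<omega>. g (theta t \<omega>) b * (softmax (theta t \<omega>) b * r b) \<partial>M)"
    by (intro sum.cong refl integral_mult_indicator_pulled_Rew[OF t g(1), where C=C] g(2))
  also have "\<dots> = (\<integral>\<omega>. (\<Sum>b\<in>UNIV. g (theta t \<omega>) b * (softmax (theta t \<omega>) b * r b)) \<partial>M)"
  proof (rule Bochner_Integration.integral_sum[symmetric], rule integrable_const_bound[where B=C])
    show "AE \<omega> in M. norm (g (theta t \<omega>) b * (softmax (theta t \<omega>) b * r b)) \<le> C" for b
    proof (rule AE_I2)
      fix \<omega>
      have "\<bar>softmax (theta t \<omega>) b * r b\<bar> \<le> 1"
        using softmax_pos[of "theta t \<omega>" b] softmax_le_1[of "theta t \<omega>" b] r_nonneg[of b] r_le_1[of b]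
        by (simp add: abs_mult mult_le_one)
      then have "\<bar>g (theta t \<omega>) b\<bar> * \<bar>softmax (theta t \<omega>) b * r b\<bar> \<le> C * 1"
        using g(2) by (intro mult_mono) (auto simp: order_trans[OF abs_ge_zero g(2)])
      then show "norm (g (theta t \<omega>) b * (softmax (theta t \<omega>) b * r b)) \<le> C" by (simp add: abs_mult)
    qed
  qed measurable
  also have "\<dots> = (\<integral>\<omega>. softmax_mean (theta t \<omega>) (\<lambda>b. r b * g (theta t \<omega>) b) \<partial>M)"
    unfolding softmax_mean_def by (simp add: mult_ac)
  finally show ?thesis .
qed

definition expected_subopt :: "nat \<Rightarrow> real" where
  "expected_subopt t = (\<integral>\<omega>. subopt r astar (theta t \<omega>) \<partial>M)"

definition expected_grad_norm_sq :: "nat \<Rightarrow> real" where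
  "expected_grad_norm_sq t = (\<integral>\<omega>. grad_norm_sq r (theta t \<omega>) \<partial>M)"

lemma integrable_subopt: "1 \<le> t \<Longrightarrow> integrable M (\<lambda>\<omega>. subopt r astar (theta t \<omega>))"
  by (rule integrable_const_bound[where B=1])
     (auto intro!: borel_measurable_F_imp_M measurable_subopt theta_measurable
       simp: subopt_nonneg[where r=r and astar=astar, OF astar_opt] subopt_le_1[where r=r and astar=astar, OF r_nonneg r_le_1])

lemma integrable_grad_norm_sq: "1 \<le> t \<Longrightarrow> integrable M (\<lambda>\<omega>. grad_norm_sq r (theta t \<omega>))"
  using grad_norm_sq_le_subopt[where r=r and astar=astar, OF r_nonneg r_le_1 astar_opt] subopt_le_1[where r=r and astar=astar, OF r_nonneg r_le_1]
  by (intro integrable_const_bound[where B=1])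
     (auto intro!: borel_measurable_F_imp_M measurable_grad_norm_sq theta_measurable
       simp: grad_norm_sq_nonneg intro: order_trans)

lemma expected_subopt_nonneg: "0 \<le> expected_subopt t"
  unfolding expected_subopt_def by (rule integral_nonneg_AE) (simp add: subopt_nonneg[where r=r and astar=astar, OF astar_opt])

lemma expected_grad_norm_sq_nonneg: "0 \<le> expected_grad_norm_sq t"
  unfolding expected_grad_norm_sq_def by (rule integral_nonneg_AE) (simp add: grad_norm_sq_nonneg)

lemma expected_grad_norm_sq_le: "1 \<le> t \<Longrightarrow> expected_grad_norm_sq t \<le> expected_subopt t"
  unfolding expected_grad_norm_sq_def expected_subopt_def
  by (intro integral_mono integrable_grad_norm_sq integrable_subopt
        grad_norm_sq_le_subopt[where r=r and astar=astar, OF r_nonneg r_le_1 astar_opt])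

text \<open>The constant \<open>5/8\<close> bounds \<open>exp (2 \<eta>) / 2\<close> for \<open>\<eta> \<le> 1/18\<close>.\<close>
lemma subopt_theta_Suc_le:
  assumes t: "1 \<le> t"
  shows "AE \<omega> in M. subopt r astar (theta (Suc t) \<omega>) \<le> subopt r astar (theta t \<omega>)
      - \<eta> t * (Rew t \<omega> * score_cov r (theta t \<omega>) (arm t \<omega>))
      + 5 / 8 * (\<eta> t)\<^sup>2 * score_var (theta t \<omega>) (arm t \<omega>)"
  using Rew_in_unit_interval[OF t] AE_space
proof eventually_elim
  case (elim \<omega>)
  have "exp (2 * \<eta> t) \<le> 1 + 2 * \<eta> t + (2 * \<eta> t)\<^sup>2"
    by (rule exp_bound) (use eta_nonneg[of t] eta_le[of t] in auto)
  also have "\<dots> \<le> 5 / 4"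
    using eta_nonneg[of t] eta_le[of t] power_mono[of "2 * \<eta> t" "1 / 9" 2] by (simp add: power2_eq_square)
  finally have B: "exp (2 * \<eta> t) / 2 * (\<eta> t)\<^sup>2 * score_var (theta t \<omega>) (arm t \<omega>)
      \<le> 5 / 8 * (\<eta> t)\<^sup>2 * score_var (theta t \<omega>) (arm t \<omega>)"
    by (intro mult_right_mono score_var_nonneg) auto
  have A: "subopt r astar (theta (Suc t) \<omega>) \<le> subopt r astar (theta t \<omega>)
      - \<eta> t * Rew t \<omega> * score_cov r (theta t \<omega>) (arm t \<omega>)
      + exp (2 * \<eta> t) / 2 * (\<eta> t)\<^sup>2 * score_var (theta t \<omega>) (arm t \<omega>)"
    unfolding theta_step[OF t elim(2)]
    by (rule subopt_policy_gradient_step_le[OF r_nonneg r_le_1]) (use elim eta_nonneg in auto)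
  from A B show ?case by (simp only: mult.assoc)
qed

lemma measurable_at_pulled_arm:
  assumes "\<And>b. (\<lambda>\<omega>. g (theta t \<omega>) b) \<in> borel_measurable (F t)"
  shows "(\<lambda>\<omega>. g (theta t \<omega>) (arm t \<omega>)) \<in> borel_measurable M"
  by (rule measurable_compose_countable[where f="\<lambda>b \<omega>. g (theta t \<omega>) b"])
     (auto intro: borel_measurable_F_imp_M assms measurable_from_subalg[OF F_sub arm_meas])

lemma integrable_Rew_score_cov_at_pulled_arm:
  assumes t: "1 \<le> t"
  shows "integrable M (\<lambda>\<omega>. Rew t \<omega> * score_cov r (theta t \<omega>) (arm t \<omega>))"
proof (rule integrable_const_bound[where B=2])
  show "AE \<omega> in M. norm (Rew t \<omega> * score_cov r (theta t \<omega>) (arm t \<omega>)) \<le> 2"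
    using Rew_in_unit_interval[OF t]
  proof eventually_elim
    case (elim \<omega>)
    have "\<bar>Rew t \<omega>\<bar> * \<bar>score_cov r (theta t \<omega>) (arm t \<omega>)\<bar> \<le> 1 * 2"
      using elim abs_score_cov_le_2[OF r_nonneg r_le_1] by (intro mult_mono) auto
    then show ?case by (simp add: abs_mult)
  qed
  have "(\<lambda>\<omega>. score_cov r (theta t \<omega>) (arm t \<omega>)) \<in> borel_measurable M"
    by (intro measurable_at_pulled_arm[where g="score_cov r"] measurable_score_cov theta_measurable[OF t])
  then show "(\<lambda>\<omega>. Rew t \<omega> * score_cov r (theta t \<omega>) (arm t \<omega>)) \<in> borel_measurable M"
    using borel_measurable_F_imp_M[OF Rew_meas] by measurable
qed

lemma integrable_score_var_at_pulled_arm: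
  assumes t: "1 \<le> t"
  shows "integrable M (\<lambda>\<omega>. score_var (theta t \<omega>) (arm t \<omega>))"
  by (intro integrable_const_bound[where B=4] AE_I2 measurable_at_pulled_arm[where g=score_var]
        measurable_score_var theta_measurable[OF t]) (simp add: abs_score_var_le_4)

lemma expected_Rew_score_cov_at_pulled_arm:
  assumes t: "1 \<le> t"
  shows "(\<integral>\<omega>. Rew t \<omega> * score_cov r (theta t \<omega>) (arm t \<omega>) \<partial>M) = expected_grad_norm_sq t"
proof -
  have "(\<lambda>\<omega>. score_cov r (theta t \<omega>) b) \<in> borel_measurable (F t)" for b
    by (intro measurable_score_cov theta_measurable[OF t])
  then show ?thesis
    unfolding expected_grad_norm_sq_def softmax_mean_reward_score_cov[symmetric]
    by (rule integral_Rew_mult_at_pulled_arm[OF t _ abs_score_cov_le_2[OF r_nonneg r_le_1]])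
qed

lemma expected_score_var_at_pulled_arm_le:
  assumes t: "1 \<le> t" and gap: "0 < reward_gap r"
  shows "(\<integral>\<omega>. score_var (theta t \<omega>) (arm t \<omega>) \<partial>M)
    \<le> 16 * (real CARD('a) - 1) / (reward_gap r)\<^sup>2 * expected_grad_norm_sq t"
proof -
  define K where "K = 16 * (real CARD('a) - 1) / (reward_gap r)\<^sup>2"
  have score_var_meas: "(\<lambda>\<omega>. score_var (theta t \<omega>) b) \<in> borel_measurable (F t)" for b
    by (intro measurable_score_var theta_measurable[OF t])
  have "(\<integral>\<omega>. score_var (theta t \<omega>) (arm t \<omega>) \<partial>M)
      = (\<integral>\<omega>. softmax_mean (theta t \<omega>) (score_var (theta t \<omega>)) \<partial>M)"
    by (rule integral_at_pulled_arm[OF t score_var_meas abs_score_var_le_4])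
  also have "\<dots> \<le> (\<integral>\<omega>. K * grad_norm_sq r (theta t \<omega>) \<partial>M)"
  proof (rule integral_mono)
    show "integrable M (\<lambda>\<omega>. softmax_mean (theta t \<omega>) (score_var (theta t \<omega>)))"
      by (intro integrable_const_bound[where B=4] AE_I2 borel_measurable_F_imp_M[where t=t]
            measurable_softmax_mean theta_measurable[OF t] score_var_meas)
         (simp add: abs_softmax_mean_le abs_score_var_le_4)
    show "integrable M (\<lambda>\<omega>. K * grad_norm_sq r (theta t \<omega>))"
      using integrable_grad_norm_sq[OF t] by simp
    show "softmax_mean (theta t \<omega>) (score_var (theta t \<omega>)) \<le> K * grad_norm_sq r (theta t \<omega>)" for \<omega>
      unfolding K_def using softmax_mean_score_var_le_grad_norm_sq[OF reward_gap_le gap] by simp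
  qed
  finally show ?thesis unfolding expected_grad_norm_sq_def K_def by simp
qed

lemma expected_subopt_Suc_le:
  assumes t: "1 \<le> t" and gap: "0 < reward_gap r"
  shows "expected_subopt (Suc t) \<le> expected_subopt t - \<eta> t * expected_grad_norm_sq t
           + 10 * (real CARD('a) - 1) / (reward_gap r)\<^sup>2 * (\<eta> t)\<^sup>2 * expected_grad_norm_sq t"
proof -
  define cov where "cov \<omega> = Rew t \<omega> * score_cov r (theta t \<omega>) (arm t \<omega>)" for \<omega>
  define var where "var \<omega> = score_var (theta t \<omega>) (arm t \<omega>)" for \<omega>
  note integrable = integrable_Rew_score_cov_at_pulled_arm[OF t, folded cov_def]
    integrable_score_var_at_pulled_arm[OF t, folded var_def] integrable_subopt
  have "AE \<omega> in M. subopt r astar (theta (Suc t) \<omega>)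
      \<le> subopt r astar (theta t \<omega>) - \<eta> t * cov \<omega> + 5 / 8 * (\<eta> t)\<^sup>2 * var \<omega>"
    using subopt_theta_Suc_le[OF t] by (simp add: cov_def var_def)
  then have "expected_subopt (Suc t)
      \<le> (\<integral>\<omega>. subopt r astar (theta t \<omega>) - \<eta> t * cov \<omega> + 5 / 8 * (\<eta> t)\<^sup>2 * var \<omega> \<partial>M)"
    unfolding expected_subopt_def by (rule integral_mono_AE[rotated 2]) (use integrable t in simp_all)
  also have "\<dots> = expected_subopt t - \<eta> t * expected_grad_norm_sq t + 5 / 8 * (\<eta> t)\<^sup>2 * (\<integral>\<omega>. var \<omega> \<partial>M)"
    unfolding expected_subopt_def expected_Rew_score_cov_at_pulled_arm[OF t, folded cov_def, symmetric]
    using integrable t by simp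
  also have "\<dots> \<le> expected_subopt t - \<eta> t * expected_grad_norm_sq t
      + 5 / 8 * (\<eta> t)\<^sup>2 * (16 * (real CARD('a) - 1) / (reward_gap r)\<^sup>2 * expected_grad_norm_sq t)"
    using expected_score_var_at_pulled_arm_le[OF t gap, folded var_def] by (intro add_left_mono mult_left_mono) auto
  finally show ?thesis using gap by (simp add: field_simps)
qed

definition max_inv_sq_opt_prob :: "nat \<Rightarrow> 'w \<Rightarrow> real" where
  "max_inv_sq_opt_prob T \<omega> = Max ((\<lambda>t. 1 / (softmax (theta t \<omega>) astar)\<^sup>2) ` {1..T})"

lemma inv_sq_opt_prob_le_max:
  "t \<in> {1..T} \<Longrightarrow> 1 / (softmax (theta t \<omega>) astar)\<^sup>2 \<le> max_inv_sq_opt_prob T \<omega>"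
  unfolding max_inv_sq_opt_prob_def by (rule Max_ge) auto

lemma one_le_inv_sq_softmax: "1 \<le> 1 / (softmax \<theta> a)\<^sup>2"
  using softmax_pos[of \<theta> a] softmax_le_1[of \<theta> a] by (simp add: power_le_one)

lemma one_le_max_inv_sq_opt_prob:
  assumes "1 \<le> T"
  shows "1 \<le> max_inv_sq_opt_prob T \<omega>"
proof -
  have "1 \<le> 1 / (softmax (theta 1 \<omega>) astar)\<^sup>2" by (rule one_le_inv_sq_softmax)
  also have "\<dots> \<le> max_inv_sq_opt_prob T \<omega>" by (rule inv_sq_opt_prob_le_max) (use assms in simp)
  finally show ?thesis .
qed

lemma mu_le_1:
  assumes T: "1 \<le> T" and \<mu>: "\<mu> = 1 / (\<integral>\<omega>. max_inv_sq_opt_prob T \<omega> \<partial>M)" "0 < \<mu>"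
  shows "\<mu> \<le> 1"
proof -
  have "integrable M (max_inv_sq_opt_prob T)"
    using \<mu> not_integrable_integral_eq by force
  then have "(\<integral>\<omega>. 1 \<partial>M) \<le> (\<integral>\<omega>. max_inv_sq_opt_prob T \<omega> \<partial>M)"
    by (intro integral_mono one_le_max_inv_sq_opt_prob T) simp
  moreover have "(\<integral>\<omega>. max_inv_sq_opt_prob T \<omega> \<partial>M) = 1 / \<mu>" using \<mu>(1) by simp
  ultimately have "1 \<le> 1 / \<mu>" by (simp add: prob_space)
  then show ?thesis using \<mu>(2) by (simp add: field_simps)
qed

lemma mu_mult_expected_subopt_sq_le:
  assumes t: "t \<in> {1..T}" and \<mu>: "\<mu> = 1 / (\<integral>\<omega>. max_inv_sq_opt_prob T \<omega> \<partial>M)" "0 < \<mu>"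
  shows "\<mu> * (expected_subopt t)\<^sup>2 \<le> expected_grad_norm_sq t"
proof -
  have "(subopt r astar (theta t \<omega>))\<^sup>2 \<le> grad_norm_sq r (theta t \<omega>) * max_inv_sq_opt_prob T \<omega>" for \<omega>
  proof -
    define p where "p = softmax (theta t \<omega>) astar"
    have "0 < p" unfolding p_def by (rule softmax_pos)
    then have "(subopt r astar (theta t \<omega>))\<^sup>2 \<le> grad_norm_sq r (theta t \<omega>) * (1 / p\<^sup>2)"
      using nonuniform_lojasiewicz[of "theta t \<omega>" astar r] unfolding p_def[symmetric]
      by (simp add: field_simps)
    also have "\<dots> \<le> grad_norm_sq r (theta t \<omega>) * max_inv_sq_opt_prob T \<omega>"
      unfolding p_def by (intro mult_left_mono inv_sq_opt_prob_le_max t grad_norm_sq_nonneg)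
    finally show ?thesis .
  qed
  moreover have "0 \<le> max_inv_sq_opt_prob T \<omega>" for \<omega>
    using one_le_max_inv_sq_opt_prob[of T \<omega>] t by simp
  moreover have "integrable M (max_inv_sq_opt_prob T)"
    using \<mu> not_integrable_integral_eq by force
  moreover have "0 < (\<integral>\<omega>. max_inv_sq_opt_prob T \<omega> \<partial>M)"
    using \<mu> by simp
  ultimately have "(expected_subopt t)\<^sup>2 \<le> expected_grad_norm_sq t * (\<integral>\<omega>. max_inv_sq_opt_prob T \<omega> \<partial>M)"
    unfolding expected_subopt_def expected_grad_norm_sq_def using t
    by (intro integral_sq_le_integral_mult_integral integrable_subopt integrable_grad_norm_sq)
       (auto simp: subopt_nonneg[where r=r and astar=astar, OF astar_opt] grad_norm_sq_nonneg)
  moreover have "(\<integral>\<omega>. max_inv_sq_opt_prob T \<omega> \<partial>M) = 1 / \<mu>" using \<mu>(1) by simp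
  ultimately show ?thesis using \<mu>(2) by (simp add: field_simps)
qed

end

theorem corollary1:
  fixes M :: "'w measure"
    and F :: "nat \<Rightarrow> 'w measure"
    and P :: "'a::finite \<Rightarrow> real measure"
    and r :: "'a \<Rightarrow> real"
    and astar :: 'a
    and arm :: "nat \<Rightarrow> 'w \<Rightarrow> 'a"
    and Rew :: "nat \<Rightarrow> 'w \<Rightarrow> real"
    and theta :: "nat \<Rightarrow> 'w \<Rightarrow> ('a \<Rightarrow> real)"
    and \<theta>1 :: "'a \<Rightarrow> real"
    and T :: nat
    and \<eta>0 \<beta> \<epsilon> :: real
    and A \<Delta> \<rho> \<alpha> \<mu> \<kappa> C1 C2 T0 :: real
    and \<eta> G :: "nat \<Rightarrow> real"
  assumes A_def: "A = real CARD('a)"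
    and Delta_def: "\<Delta> = reward_gap r"
    and rho_def: "\<rho> = 8 * A powr (3/2) / \<Delta>\<^sup>2"
    and alpha_def: "\<alpha> = (\<beta> / real T) powr (1 / real T)"
    and eta_def: "\<eta> = (\<lambda>t::nat. \<eta>0 * \<alpha> ^ t)"
    and G_def: "G = (\<lambda>t::nat. \<integral>\<omega>. subopt r astar (theta t \<omega>) \<partial>M)"
    and mu_def: "\<mu> = 1 / (\<integral>\<omega>. Max ((\<lambda>t. 1 / (softmax (theta t \<omega>) astar)\<^sup>2) ` {1..T}) \<partial>M)"
    and kappa_def: "\<kappa> = 2 / (\<mu> * \<eta>0)"
    and C1_def: "C1 = exp (2 * \<beta> / (\<kappa> * ln (real T / \<beta>)))"
    and C2_def: "C2 = exp (2 * \<beta> / (\<kappa> * ln (real T / \<beta>)))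
               * (32 * \<rho> * \<kappa>\<^sup>2 / (5 * (exp 1)\<^sup>2 * \<alpha>\<^sup>2)) * (ln (real T / \<beta>))\<^sup>2"
    and T0_def: "T0 = real T * max (ln (4 * \<rho> * \<eta>0) / ln (real T / \<beta>)) 0"
    and arms: "CARD('a) \<ge> 2"
    (* reward distributions: probability measures on the reals supported in [0,1] *)
    and P_prob: "\<And>a. prob_space (P a)"
    and P_sets: "\<And>a. sets (P a) = sets borel"
    and P_supp: "\<And>a. AE x in P a. 0 \<le> x \<and> x \<le> 1"
    and r_mean: "\<And>a. r a = (\<integral>x. x \<partial>P a)"
    and astar_opt: "\<And>a. r a \<le> r astar"
    and Delta_pos: "\<Delta> > 0"
    (* underlying probability space and filtration (F t = information before round t) *)
    and M_prob: "prob_space M"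
    and F_sub: "\<And>t. subalgebra M (F t)"
    and F_mono: "\<And>s t. s \<le> t \<Longrightarrow> sets (F s) \<subseteq> sets (F t)"
    and arm_meas: "\<And>t. arm t \<in> measurable (F (Suc t)) (count_space UNIV)"
    and Rew_meas: "\<And>t. Rew t \<in> borel_measurable (F (Suc t))"
    (* a_t ~ pi_{theta_t} conditionally on the past *)
    and arm_law: "\<And>t a B. t \<ge> 1 \<Longrightarrow> B \<in> sets (F t) \<Longrightarrow>
        measure M (B \<inter> {\<omega>\<in>space M. arm t \<omega> = a})
          = (\<integral>\<omega>. indicator B \<omega> * softmax (theta t \<omega>) a \<partial>M)"
    (* R_t ~ P_{a_t} conditionally on the past and on a_t *)
    and Rew_law: "\<And>t a B S. t \<ge> 1 \<Longrightarrow> B \<in> sets (F t) \<Longrightarrow> S \<in> sets borel \<Longrightarrow>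
        measure M (B \<inter> {\<omega>\<in>space M. arm t \<omega> = a} \<inter> {\<omega>\<in>space M. Rew t \<omega> \<in> S})
          = measure M (B \<inter> {\<omega>\<in>space M. arm t \<omega> = a}) * measure (P a) S"
    (* stochastic softmax policy gradient iterates *)
    and theta_init: "\<And>\<omega>. \<omega> \<in> space M \<Longrightarrow> theta 1 \<omega> = \<theta>1"
    and theta_step: "\<And>t \<omega>. t \<ge> 1 \<Longrightarrow> \<omega> \<in> space M \<Longrightarrow>
        theta (Suc t) \<omega> = (\<lambda>a. theta t \<omega> a + \<eta> t * ghat (theta t \<omega>) (arm t \<omega>) (Rew t \<omega>) a)"
    (* parameters *)
    and eta0_pos: "\<eta>0 > 0"
    and eta0_le: "\<eta>0 \<le> 1 / 18"
    and beta_ge: "\<beta> \<ge> 1"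
    and beta_lt_T: "\<beta> < real T"
    and eps: "0 < \<epsilon>" "\<epsilon> < 1"
    and mu_pos: "\<mu> > 0"
  shows "((\<forall>t\<in>{1..T}. G t \<ge> \<epsilon>) \<longrightarrow>
           G (Suc T) \<le> G 1 * C1 * exp (- (\<alpha> * \<epsilon> * real T) / (\<kappa> * ln (real T / \<beta>)))
                       + C2 * (\<Sum>t\<in>{t::nat. 1 \<le> t \<and> real t \<le> T0 - 1}. G t) / (\<epsilon>\<^sup>2 * (real T)\<^sup>2))
       \<and> (\<not> (\<forall>t\<in>{1..T}. G t \<ge> \<epsilon>) \<longrightarrow> Min (G ` {1..T}) \<le> \<epsilon>)"
proof -
  have \<eta>: "0 \<le> \<eta> t" "\<eta> t \<le> 1 / 18" for t
    using geometric_step_size_bounds[OF eta0_pos beta_ge beta_lt_T, of t] eta0_le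
    unfolding eta_def alpha_def by auto
  interpret softmax_policy_gradient M F P r astar arm Rew theta \<theta>1 \<eta>
    by (rule softmax_policy_gradient.intro[OF M_prob softmax_policy_gradient_axioms.intro])
       (fact P_prob P_sets P_supp r_mean astar_opt F_sub F_mono arm_meas Rew_meas arm_law Rew_law
         theta_init theta_step \<eta>)+
  have G_eq: "G = expected_subopt" unfolding G_def expected_subopt_def ..
  note \<mu> = mu_def[folded max_inv_sq_opt_prob_def] mu_pos
  have "1 \<le> T" using beta_ge beta_lt_T by linarith
  show ?thesis
  proof (intro conjI impI, goal_cases)
    case 1
    then show ?case unfolding G_eq
      by (intro subopt_recursion_bound[OF _ Delta_pos rho_def alpha_def eta_def kappa_def C1_def C2_def
            T0_def eta0_pos eta0_le beta_ge beta_lt_T eps mu_pos mu_le_1[OF \<open>1 \<le> T\<close> \<mu>]])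
         (use arms A_def Delta_def Delta_pos expected_subopt_Suc_le mu_mult_expected_subopt_sq_le[OF _ \<mu>]
            expected_grad_norm_sq_le expected_grad_norm_sq_nonneg expected_subopt_nonneg G_eq in auto)
  next
    case 2
    then obtain t where t: "t \<in> {1..T}" "G t < \<epsilon>" by auto
    then have "Min (G ` {1..T}) \<le> G t" by (intro Min_le) auto
    then show ?case using t(2) by linarith
  qed
qed

end
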